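(* Let $\Sigma^2$ be a Riemann surface and $\vec\Phi:\Sigma^2\to S^4$ a smooth conformal immersion. Then Montiel's forms $\mathscr Q_{\vec\Phi}=2\langle\partial^2\Psi,\partial^2\bar\Psi\rangle_h$ and $\mathscr O_{\vec\Phi}=\langle\partial^2\Psi,\partial^2\Psi\rangle_h\otimes\langle\partial^2\bar\Psi,\partial^2\bar\Psi\rangle_h$ are given by $$\mathscr Q_{\vec\Phi}=g^{-1}\otimes\big(\partial\bar\partial\vec h_0\dot\otimes\vec h_0-\partial\vec h_0\dot\otimes\bar\partial\vec h_0\big)+\tfrac14(1+|\vec H|^2)\vec h_0\dot\otimes\vec h_0,$$ $$\begin{aligned}\mathscr O_{\vec\Phi}=\ &g^{-2}\otimes\Big\{\tfrac14(\partial\bar\partial\vec h_0\dot\otimes\partial\bar\partial\vec h_0)\otimes(\vec h_0\dot\otimes\vec h_0)+\tfrac14(\partial\vec h_0\dot\otimes\partial\vec h_0)\otimes(\bar\partial\vec h_0\dot\otimes\bar\partial\vec h_0)\\&-\tfrac12(\partial\bar\partial\vec h_0\dot\otimes\partial\vec h_0)\otimes(\bar\partial\vec h_0\dot\otimes\vec h_0)-\tfrac12(\partial\bar\partial\vec h_0\dot\otimes\bar\partial\vec h_0)\otimes(\partial\vec h_0\dot\otimes\vec h_0)+\tfrac12(\partial\bar\partial\vec h_0\dot\otimes\vec h_0)\otimes(\partial\vec h_0\dot\otimes\bar\partial\vec h_0)\Big\}\\&+\tfrac14(1+|\vec H|^2)g^{-1}\otimes\Big\{\tfrac12(\partial\bar\partial\vec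 h_0\dot\otimes\vec h_0)\otimes(\vec h_0\dot\otimes\vec h_0)-(\partial\vec h_0\dot\otimes\vec h_0)\otimes(\bar\partial\vec h_0\dot\otimes\vec h_0)+\tfrac12(\partial\vec h_0\dot\otimes\bar\partial\vec h_0)\otimes(\vec h_0\dot\otimes\vec h_0)\Big\}\\&+\tfrac1{64}(1+|\vec H|^2)^2(\vec h_0\dot\otimes\vec h_0)\otimes(\vec h_0\dot\otimes\vec h_0),\end{aligned}$$ where here $\partial,\bar\partial$ denote the normal operators $\partial^N,\bar\partial^N$.
   Context: $S^4\subset\mathbb R^5$ is the unit sphere. In a local complex coordinate $z$, $g=e^{2\lambda}|dz|^2$ is the induced metric; $\langle\cdot,\cdot\rangle$ is the complex-bilinear Euclidean product; $\nabla^N$ is the normal connection of $\vec\Phi$ in $S^4$ extended to the complexified normal bundle $T^N_{\mathbb C}\Sigma^2$; $\partial=\partial^N=\nabla^N_{\partial_z}(\cdot)\otimes dz$, $\bar\partial=\bar\partial^N=\nabla^N_{\partial_{\bar z}}(\cdot)\otimes d\bar z$. $\vec{\mathbb I}$ is the second fundamental form of $\vec\Phi$ in $S^4$, $\vec H=\frac12\mathrm{tr}_g\vec{\mathbb I}$, $\vec h_0=2\vec{\mathbb I}(\partial_z\vec\Phi,\partial_z\vec\Phi)dz^2$. $g^{-1}\otimes(f\,dz^p\otimes d\bar z^q)=e^{-2\lambda}f\,dz^{p-1}\otimes d\bar z^{q-1}$, $g^{-2}=g^{-1}\otimes g^{-1}$; $\vec f_1dz^{p_1}d\bar z^{q_1}\dot\otimes\vec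 f_2dz^{p_2}d\bar z^{q_2}=\langle\vec f_1,\vec f_2\rangle dz^{p_1+p_2}d\bar z^{q_1+q_2}$. Pseudo Gauss map: on $\mathbb R^6$ let $h=-dx_0^2+dx_1^2+\dots+dx_5^2$, extended complex-bilinearly as $\langle\cdot,\cdot\rangle_h$; $\vec a=(1,0,\dots,0)$, and $\vec\Phi$, normal vectors are viewed in $\{0\}\times\mathbb R^5$. Define the section $\psi$ of $(T^N_{\mathbb C}\Sigma^2)^*\otimes\mathbb C^6$ by $\psi(\vec\xi)=\langle\vec H,\vec\xi\rangle(\vec a+\vec\Phi)+\vec\xi$, with derivative $(\nabla_{\partial_z}\psi)(\vec\xi)=\partial_z(\psi(\vec\xi))-\psi(\nabla^N_{\partial_z}\vec\xi)$ and $\partial^2\psi=(\nabla_{\partial_z}\nabla_{\partial_z}\psi)dz^2$. Let $J$ be the rotation by $+\pi/2$ in the oriented normal plane; $T^N_{\mathbb C}\Sigma^2=\mathscr N\oplus\bar{\mathscr N}$ with $\mathscr N$ the $i$-eigenspace of $J$. With $(\vec n_1,\vec n_2)$ an oriented orthonormal normal frame, $J\vec n_1=-\vec n_2$, $\vec e_1=(\vec n_1+i\vec n_2)/\sqrt2$ spans $\mathscr N$ and $\vec e_2=\bar{\vec e}_1$ spans $\bar{\mathscr N}$. $\Psi$ is the restriction of $\psi$ to $\mathscr N$; concretely $\mathscr Q_{\vec\Phi}=2\langle\partial^2\psi,\partial^2\psi\rangle_h(\vec e_1,\vec e_2)$ and $\mathscr O_{\vec\Phi}=\langle\partial^2\psi,\partial^2\psi\rangle_h(\vec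 e_1,\vec e_1)\otimes\langle\partial^2\psi,\partial^2\psi\rangle_h(\vec e_2,\vec e_2)$. *)

theory Defs
  imports "HOL-Analysis.Analysis"
begin

text \<open>Local setting: a complex coordinate z on an open set U of the complex plane
(a chart of the Riemann surface). All tensors are represented by their coefficients
w.r.t. dz^p dzbar^q; the operators on tensors act coefficientwise, as in the paper.\<close>

definition dirD :: "complex \<Rightarrow> (complex \<Rightarrow> 'b::real_normed_vector) \<Rightarrow> complex \<Rightarrow> 'b" where
  "dirD v f p = frechet_derivative f (at p) v"

fun iterD :: "complex list \<Rightarrow> (complex \<Rightarrow> 'b::real_normed_vector) \<Rightarrow> complex \<Rightarrow> 'b" where
  "iterD [] f = f"
| "iterD (v # vs) f = dirD v (iterD vs f)"

definition smooth_on :: "complex set \<Rightarrow> (complex \<Rightarrow> 'b::real_normed_vector) \<Rightarrow> bool" where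
  "smooth_on U f \<longleftrightarrow> (\<forall>vs. iterD vs f differentiable_on U)"

definition cvec :: "real^5 \<Rightarrow> complex^5" where
  "cvec x = (\<chi> i. complex_of_real (x $ i))"

definition cbil :: "complex^5 \<Rightarrow> complex^5 \<Rightarrow> complex" where
  "cbil a b = (\<Sum>i\<in>UNIV. a $ i * b $ i)"

text \<open>C^6 = C x C^5 (coordinate x0 first); complex-bilinear extension of
 h = -dx0^2 + dx1^2 + ... + dx5^2.\<close>
type_synonym c6 = "complex \<times> (complex^5)"

definition hbil :: "c6 \<Rightarrow> c6 \<Rightarrow> complex" where
  "hbil a b = - fst a * fst b + cbil (snd a) (snd b)"

definition dzv :: "(complex \<Rightarrow> complex^5) \<Rightarrow> complex \<Rightarrow> complex^5" where
  "dzv f p = (1/2 :: complex) *s (dirD 1 f p - \<i> *s dirD \<i> f p)"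

definition dzbv :: "(complex \<Rightarrow> complex^5) \<Rightarrow> complex \<Rightarrow> complex^5" where
  "dzbv f p = (1/2 :: complex) *s (dirD 1 f p + \<i> *s dirD \<i> f p)"

definition dzs :: "(complex \<Rightarrow> complex) \<Rightarrow> complex \<Rightarrow> complex" where
  "dzs f p = (dirD 1 f p - \<i> * dirD \<i> f p) / 2"

definition dzP :: "(complex \<Rightarrow> c6) \<Rightarrow> complex \<Rightarrow> c6" where
  "dzP F p = (dzs (\<lambda>q. fst (F q)) p, dzv (\<lambda>q. snd (F q)) p)"

definition conformal_immersion_S4 :: "complex set \<Rightarrow> (complex \<Rightarrow> real^5) \<Rightarrow> bool" where
  "conformal_immersion_S4 U \<Phi> \<longleftrightarrow> open U \<and> smooth_on U \<Phi> \<and>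
     (\<forall>p\<in>U. norm (\<Phi> p) = 1 \<and>
        dirD 1 \<Phi> p \<bullet> dirD \<i> \<Phi> p = 0 \<and>
        norm (dirD 1 \<Phi> p) = norm (dirD \<i> \<Phi> p) \<and>
        dirD 1 \<Phi> p \<noteq> 0)"

text \<open>Oriented orthonormal frame (n1,n2) of the normal bundle of Phi in S^4
 (orientation of S^4 induced as boundary of the unit ball, of the surface by z).\<close>
definition oriented_normal_frame ::
  "complex set \<Rightarrow> (complex \<Rightarrow> real^5) \<Rightarrow> (complex \<Rightarrow> real^5) \<Rightarrow> (complex \<Rightarrow> real^5) \<Rightarrow> bool" where
  "oriented_normal_frame U \<Phi> n1 n2 \<longleftrightarrow> smooth_on U n1 \<and> smooth_on U n2 \<and>
     (\<forall>p\<in>U. norm (n1 p) = 1 \<and> norm (n2 p) = 1 \<and> n1 p \<bullet> n2 p = 0 \<and>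
        n1 p \<bullet> \<Phi> p = 0 \<and> n2 p \<bullet> \<Phi> p = 0 \<and>
        n1 p \<bullet> dirD 1 \<Phi> p = 0 \<and> n2 p \<bullet> dirD 1 \<Phi> p = 0 \<and>
        n1 p \<bullet> dirD \<i> \<Phi> p = 0 \<and> n2 p \<bullet> dirD \<i> \<Phi> p = 0 \<and>
        det (vector [\<Phi> p, dirD 1 \<Phi> p, dirD \<i> \<Phi> p, n1 p, n2 p] :: real^5^5) > 0)"

definition Phic :: "(complex \<Rightarrow> real^5) \<Rightarrow> complex \<Rightarrow> complex^5" where
  "Phic \<Phi> p = cvec (\<Phi> p)"

text \<open>e^{2 lambda}, where g = e^{2 lambda} |dz|^2.\<close>
definition e2lam :: "(complex \<Rightarrow> real^5) \<Rightarrow> complex \<Rightarrow> complex" where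
  "e2lam \<Phi> p = complex_of_real ((norm (dirD 1 \<Phi> p))\<^sup>2)"

definition nproj :: "(complex \<Rightarrow> real^5) \<Rightarrow> complex \<Rightarrow> complex^5 \<Rightarrow> complex^5" where
  "nproj \<Phi> p v = v - cbil v (Phic \<Phi> p) *s Phic \<Phi> p
     - (1 / e2lam \<Phi> p) *s (cbil v (cvec (dirD 1 \<Phi> p)) *s cvec (dirD 1 \<Phi> p)
                          + cbil v (cvec (dirD \<i> \<Phi> p)) *s cvec (dirD \<i> \<Phi> p))"

definition nablaN :: "(complex \<Rightarrow> real^5) \<Rightarrow> (complex \<Rightarrow> complex^5) \<Rightarrow> complex \<Rightarrow> complex^5" where
  "nablaN \<Phi> \<xi> p = nproj \<Phi> p (dzv \<xi> p)"

definition nablaNb :: "(complex \<Rightarrow> real^5) \<Rightarrow> (complex \<Rightarrow> complex^5) \<Rightarrow> complex \<Rightarrow> complex^5" where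
  "nablaNb \<Phi> \<xi> p = nproj \<Phi> p (dzbv \<xi> p)"

text \<open>Coefficient of h0 = 2 II(dPhi/dz, dPhi/dz) dz^2.\<close>
definition h0 :: "(complex \<Rightarrow> real^5) \<Rightarrow> complex \<Rightarrow> complex^5" where
  "h0 \<Phi> p = 2 *s nproj \<Phi> p (dzv (dzv (Phic \<Phi>)) p)"

text \<open>Mean curvature H = (1/2) tr_g II = 2 e^{-2 lambda} II(d/dz, d/dzbar).\<close>
definition Hvec :: "(complex \<Rightarrow> real^5) \<Rightarrow> complex \<Rightarrow> complex^5" where
  "Hvec \<Phi> p = (2 / e2lam \<Phi> p) *s nproj \<Phi> p (dzv (dzbv (Phic \<Phi>)) p)"

text \<open>psi(xi) = <H,xi>(a + Phi) + xi, applied to a normal field xi.\<close>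
definition psiF :: "(complex \<Rightarrow> real^5) \<Rightarrow> (complex \<Rightarrow> complex^5) \<Rightarrow> complex \<Rightarrow> c6" where
  "psiF \<Phi> \<xi> p = (cbil (Hvec \<Phi> p) (\<xi> p),
                   cbil (Hvec \<Phi> p) (\<xi> p) *s Phic \<Phi> p + \<xi> p)"

definition nablaT :: "(complex \<Rightarrow> real^5) \<Rightarrow> ((complex \<Rightarrow> complex^5) \<Rightarrow> complex \<Rightarrow> c6)
     \<Rightarrow> (complex \<Rightarrow> complex^5) \<Rightarrow> complex \<Rightarrow> c6" where
  "nablaT \<Phi> T \<xi> p = dzP (T \<xi>) p - T (nablaN \<Phi> \<xi>) p"

text \<open>Coefficient of d^2 psi = (nabla nabla psi) dz^2.\<close>
definition d2psi :: "(complex \<Rightarrow> real^5) \<Rightarrow> (complex \<Rightarrow> complex^5) \<Rightarrow> complex \<Rightarrow> c6" where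
  "d2psi \<Phi> = nablaT \<Phi> (nablaT \<Phi> (psiF \<Phi>))"

definition e1 :: "(complex \<Rightarrow> real^5) \<Rightarrow> (complex \<Rightarrow> real^5) \<Rightarrow> complex \<Rightarrow> complex^5" where
  "e1 n1 n2 p = (1 / complex_of_real (sqrt 2)) *s (cvec (n1 p) + \<i> *s cvec (n2 p))"

definition e2 :: "(complex \<Rightarrow> real^5) \<Rightarrow> (complex \<Rightarrow> real^5) \<Rightarrow> complex \<Rightarrow> complex^5" where
  "e2 n1 n2 p = (1 / complex_of_real (sqrt 2)) *s (cvec (n1 p) - \<i> *s cvec (n2 p))"

text \<open>Coefficients (of dz^4 resp. dz^8) of Montiel's forms.\<close>
definition MontielQ :: "(complex \<Rightarrow> real^5) \<Rightarrow> (complex \<Rightarrow> real^5) \<Rightarrow> (complex \<Rightarrow> real^5) \<Rightarrow> complex \<Rightarrow> complex" where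
  "MontielQ \<Phi> n1 n2 p = 2 * hbil (d2psi \<Phi> (e1 n1 n2) p) (d2psi \<Phi> (e2 n1 n2) p)"

definition MontielO :: "(complex \<Rightarrow> real^5) \<Rightarrow> (complex \<Rightarrow> real^5) \<Rightarrow> (complex \<Rightarrow> real^5) \<Rightarrow> complex \<Rightarrow> complex" where
  "MontielO \<Phi> n1 n2 p = hbil (d2psi \<Phi> (e1 n1 n2) p) (d2psi \<Phi> (e1 n1 n2) p)
                       * hbil (d2psi \<Phi> (e2 n1 n2) p) (d2psi \<Phi> (e2 n1 n2) p)"

end

theory Submission
  imports Defs
begin

text \<open>Write \<open>Pz, Pb, Pzb\<close> for \<open>\<Phi>_z, \<Phi>_zbar, \<Phi>_zzbar\<close>. In \<open>\<complex>\<^sup>6\<close> the vectors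
  \<open>a + \<Phi>, Pz, Pb, Pzb\<close> have Lorentz products fixed by conformality: \<open>a + \<Phi>\<close> is null and
  orthogonal to \<open>Pz, Pb\<close>, and \<open>Pzb = e\<^sup>2\<^sup>\<lambda>(H - \<Phi>)/2\<close> by the Gauss formula.
  Differentiating \<open>\<psi>(\<xi>) = \<langle>H,\<xi>\<rangle>(a + \<Phi>) + \<xi>\<close> twice, with the Weingarten formula and the
  Codazzi equation \<open>nablaNb h\<^sub>0 = e\<^sup>2\<^sup>\<lambda> nablaN H\<close>, expresses \<open>\<partial>\<^sup>2\<psi>(\<xi>)\<close> in this frame with
  coefficients built from the products of \<open>\<xi>\<close> with \<open>nablaN (nablaNb h\<^sub>0), nablaNb h\<^sub>0, nablaN h\<^sub>0, h\<^sub>0\<close>.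
  So \<open>\<langle>\<partial>\<^sup>2\<psi>(\<xi>), \<partial>\<^sup>2\<psi>(\<eta>)\<rangle>\<^sub>h\<close> is an explicit bilinear expression in these products, and on
  the null frame \<open>e\<^sub>1, e\<^sub>2\<close> of the normal bundle, where \<open>\<langle>u, v\<rangle> = u\<^sub>1v\<^sub>2 + u\<^sub>2v\<^sub>1\<close>, both of
  Montiel's forms reduce to polynomial identities.\<close>

lemma dirD_eqI: "(f has_derivative f') (at q) \<Longrightarrow> dirD v f q = f' v"
  unfolding dirD_def using frechet_derivative_at by metis

lemma dirD_cong_open:
  assumes "open U" "q \<in> U" "\<And>x. x \<in> U \<Longrightarrow> f x = g x"
  shows "dirD v f q = dirD v g q"
proof -
  have "(f has_derivative D) (at q) \<longleftrightarrow> (g has_derivative D) (at q)" for D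
    using has_derivative_transform_within_open[OF _ assms(1,2), where t=UNIV] assms(3) by metis
  then show ?thesis unfolding dirD_def frechet_derivative_def by simp
qed

lemma differentiable_on_open_imp_at:
  "open U \<Longrightarrow> f differentiable_on U \<Longrightarrow> q \<in> U \<Longrightarrow> f differentiable (at q)"
  using differentiable_on_eq_differentiable_at by blast

lemma differentiable_on_cong_open:
  assumes "open U" "\<And>x. x \<in> U \<Longrightarrow> f x = g x" "f differentiable_on U"
  shows "g differentiable_on U"
  unfolding differentiable_on_eq_differentiable_at[OF assms(1)]
proof
  fix q assume q: "q \<in> U"
  then obtain D where "(f has_derivative D) (at q)"
    using assms differentiable_on_open_imp_at differentiable_def by metis
  then have "(g has_derivative D) (at q)"
    using has_derivative_transform_within_open[OF _ assms(1) q, where t=UNIV] assms(2) by metis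
  then show "g differentiable at q" unfolding differentiable_def by blast
qed

lemma dirD_add:
  assumes "f differentiable (at q)" "g differentiable (at q)"
  shows "dirD v (\<lambda>x. f x + g x) q = dirD v f q + dirD v g q"
proof -
  obtain F G where F: "(f has_derivative F) (at q)" and G: "(g has_derivative G) (at q)"
    using assms unfolding differentiable_def by blast
  show ?thesis using dirD_eqI[OF has_derivative_add[OF F G]] dirD_eqI[OF F] dirD_eqI[OF G] by simp
qed

lemma dirD_bounded_linear:
  assumes "bounded_linear L" "f differentiable (at q)"
  shows "dirD v (\<lambda>x. L (f x)) q = L (dirD v f q)"
proof -
  obtain F where F: "(f has_derivative F) (at q)"
    using assms unfolding differentiable_def by blast
  show ?thesis using dirD_eqI[OF bounded_linear.has_derivative[OF assms(1) F]] dirD_eqI[OF F] by simp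
qed

lemma dirD_bounded_bilinear:
  assumes "bounded_bilinear bp" "f differentiable (at q)" "g differentiable (at q)"
  shows "dirD v (\<lambda>x. bp (f x) (g x)) q = bp (f q) (dirD v g q) + bp (dirD v f q) (g q)"
proof -
  obtain F G where F: "(f has_derivative F) (at q)" and G: "(g has_derivative G) (at q)"
    using assms unfolding differentiable_def by blast
  show ?thesis
    using dirD_eqI[OF bounded_bilinear.FDERIV[OF assms(1) F G]] dirD_eqI[OF F] dirD_eqI[OF G] by simp
qed

lemma dirD_const: "dirD v (\<lambda>x. c) q = 0"
proof -
  have "((\<lambda>x. c) has_derivative (\<lambda>h. 0)) (at q)" by simp
  then show ?thesis using dirD_eqI by fastforce
qed

lemma dirD_minus:
  assumes "f differentiable (at q)"
  shows "dirD v (\<lambda>x. - f x) q = - dirD v f q"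
  using dirD_bounded_linear[OF bounded_linear_minus[OF bounded_linear_ident] assms] by simp

lemma dirD_diff:
  assumes "f differentiable (at q)" "g differentiable (at q)"
  shows "dirD v (\<lambda>x. f x - g x) q = dirD v f q - dirD v g q"
  using dirD_add[OF assms(1) differentiable_minus[OF assms(2)]] dirD_minus[OF assms(2)] by simp

lemma dirD_inverse:
  fixes f :: "complex \<Rightarrow> 'b::real_normed_div_algebra"
  assumes "f differentiable (at q)" "f q \<noteq> 0"
  shows "dirD v (\<lambda>x. inverse (f x)) q = - (inverse (f q) * dirD v f q * inverse (f q))"
proof -
  obtain F where F: "(f has_derivative F) (at q)"
    using assms unfolding differentiable_def by blast
  show ?thesis using dirD_eqI[OF Deriv.has_derivative_inverse[OF assms(2) F]] dirD_eqI[OF F] by simp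
qed

text \<open>An inductive form of \<open>smooth_on\<close>, suited to proving closure properties by induction
  on the order.\<close>

fun C_on :: "nat \<Rightarrow> complex set \<Rightarrow> (complex \<Rightarrow> 'b::real_normed_vector) \<Rightarrow> bool" where
  "C_on 0 U f = True"
| "C_on (Suc k) U f = (f differentiable_on U \<and> (\<forall>v. C_on k U (dirD v f)))"

definition Cinf_on :: "complex set \<Rightarrow> (complex \<Rightarrow> 'b::real_normed_vector) \<Rightarrow> bool" where
  "Cinf_on U f \<longleftrightarrow> (\<forall>k. C_on k U f)"

lemma iterD_append: "iterD (vs @ [v]) f = iterD vs (dirD v f)"
  by (induction vs) auto

lemma smooth_on_imp_C_on: "smooth_on U f \<Longrightarrow> C_on k U f"
proof (induction k arbitrary: f)
  case 0 then show ?case by simp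
next
  case (Suc k)
  have "f differentiable_on U"
    using Suc.prems iterD.simps(1) unfolding smooth_on_def by metis
  moreover have "smooth_on U (dirD v f)" for v
    using Suc.prems iterD_append unfolding smooth_on_def by metis
  ultimately show ?case using Suc.IH by simp
qed

lemma smooth_on_imp_Cinf_on: "smooth_on U f \<Longrightarrow> Cinf_on U f"
  using smooth_on_imp_C_on Cinf_on_def by blast

lemma C_on_Suc_imp: "C_on (Suc k) U f \<Longrightarrow> C_on k U f"
  by (induction k arbitrary: f) auto

lemma Cinf_on_differentiable_on: "Cinf_on U f \<Longrightarrow> f differentiable_on U"
  unfolding Cinf_on_def by (metis C_on.simps(2))

lemma Cinf_on_differentiable_at: "open U \<Longrightarrow> Cinf_on U f \<Longrightarrow> q \<in> U \<Longrightarrow> f differentiable (at q)"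
  using Cinf_on_differentiable_on differentiable_on_open_imp_at by blast

lemma Cinf_on_dirD: "Cinf_on U f \<Longrightarrow> Cinf_on U (dirD v f)"
  unfolding Cinf_on_def by (metis C_on.simps(2))

lemma C_on_cong_open:
  assumes "open U" "\<And>x. x \<in> U \<Longrightarrow> f x = g x" "C_on k U f"
  shows "C_on k U g"
  using assms(2,3)
proof (induction k arbitrary: f g)
  case 0 then show ?case by simp
next
  case (Suc k)
  have "dirD v f x = dirD v g x" if "x \<in> U" for v x
    using dirD_cong_open[OF assms(1) that] Suc.prems(1) by blast
  then have "C_on k U (dirD v g)" for v using Suc.IH[of "dirD v f" "dirD v g"] Suc.prems by simp
  moreover have "g differentiable_on U" using Suc.prems differentiable_on_cong_open[OF assms(1), of f g] by simp
  ultimately show ?case by simp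
qed

lemma C_on_add:
  assumes "open U" shows "C_on k U f \<Longrightarrow> C_on k U g \<Longrightarrow> C_on k U (\<lambda>x. f x + g x)"
proof (induction k arbitrary: f g)
  case 0 then show ?case by simp
next
  case (Suc k)
  have df: "f differentiable_on U" and dg: "g differentiable_on U"
    using Suc.prems by auto
  have "C_on k U (dirD v (\<lambda>x. f x + g x))" for v
  proof (rule C_on_cong_open[OF assms])
    show "C_on k U (\<lambda>x. dirD v f x + dirD v g x)" using Suc by auto
    fix x assume x: "x \<in> U"
    show "dirD v f x + dirD v g x = dirD v (\<lambda>x. f x + g x) x"
      using dirD_add[OF differentiable_on_open_imp_at[OF assms df x]
          differentiable_on_open_imp_at[OF assms dg x]] by simp
  qed
  then show ?case using differentiable_on_add[OF df dg] by simp
qed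

lemma C_on_bounded_linear:
  assumes "open U" "bounded_linear L" shows "C_on k U f \<Longrightarrow> C_on k U (\<lambda>x. L (f x))"
proof (induction k arbitrary: f)
  case 0 then show ?case by simp
next
  case (Suc k)
  have df: "f differentiable_on U" using Suc.prems by auto
  have "(\<lambda>x. L (f x)) differentiable_on U"
    unfolding differentiable_on_eq_differentiable_at[OF assms(1)]
  proof
    fix x assume x: "x \<in> U"
    obtain F where "(f has_derivative F) (at x)"
      using differentiable_on_open_imp_at[OF assms(1) df x] unfolding differentiable_def by blast
    then show "(\<lambda>x. L (f x)) differentiable at x"
      using bounded_linear.has_derivative[OF assms(2)] unfolding differentiable_def by blast
  qed
  moreover have "C_on k U (dirD v (\<lambda>x. L (f x)))" for v
  proof (rule C_on_cong_open[OF assms(1)])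
    show "C_on k U (\<lambda>x. L (dirD v f x))" using Suc by auto
    fix x assume x: "x \<in> U"
    show "L (dirD v f x) = dirD v (\<lambda>x. L (f x)) x"
      using dirD_bounded_linear[OF assms(2) differentiable_on_open_imp_at[OF assms(1) df x]] by simp
  qed
  ultimately show ?case by simp
qed

lemma C_on_const: "C_on k U (\<lambda>x. c)"
proof (induction k arbitrary: c)
  case 0 then show ?case by simp
next
  case (Suc k)
  have "dirD v (\<lambda>x. c) = (\<lambda>x. 0)" for v using dirD_const by blast
  then show ?case using Suc by simp
qed

lemma C_on_bounded_bilinear:
  assumes "open U" "bounded_bilinear bp"
  shows "C_on k U f \<Longrightarrow> C_on k U g \<Longrightarrow> C_on k U (\<lambda>x. bp (f x) (g x))"
proof (induction k arbitrary: f g)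
  case 0 then show ?case by simp
next
  case (Suc k)
  have df: "f differentiable_on U" and dg: "g differentiable_on U"
    using Suc.prems by auto
  have "(\<lambda>x. bp (f x) (g x)) differentiable_on U"
    unfolding differentiable_on_eq_differentiable_at[OF assms(1)]
  proof
    fix x assume x: "x \<in> U"
    obtain F G where "(f has_derivative F) (at x)" "(g has_derivative G) (at x)"
      using differentiable_on_open_imp_at[OF assms(1) df x] differentiable_on_open_imp_at[OF assms(1) dg x]
      unfolding differentiable_def by blast
    then show "(\<lambda>x. bp (f x) (g x)) differentiable at x"
      using bounded_bilinear.FDERIV[OF assms(2)] unfolding differentiable_def by blast
  qed
  moreover have "C_on k U (dirD v (\<lambda>x. bp (f x) (g x)))" for v
  proof (rule C_on_cong_open[OF assms(1)])
    have "C_on k U f" "C_on k U g" "C_on k U (dirD v f)" "C_on k U (dirD v g)"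
      using Suc.prems C_on_Suc_imp by auto
    then show "C_on k U (\<lambda>x. bp (f x) (dirD v g x) + bp (dirD v f x) (g x))"
      using C_on_add[OF assms(1)] Suc.IH by blast
    fix x assume x: "x \<in> U"
    show "bp (f x) (dirD v g x) + bp (dirD v f x) (g x) = dirD v (\<lambda>x. bp (f x) (g x)) x"
      using dirD_bounded_bilinear[OF assms(2) differentiable_on_open_imp_at[OF assms(1) df x]
          differentiable_on_open_imp_at[OF assms(1) dg x]] by simp
  qed
  ultimately show ?case by simp
qed

lemma C_on_inverse:
  fixes f :: "complex \<Rightarrow> 'b::real_normed_field"
  assumes "open U" "\<And>x. x \<in> U \<Longrightarrow> f x \<noteq> 0"
  shows "C_on k U f \<Longrightarrow> C_on k U (\<lambda>x. inverse (f x))"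
proof (induction k)
  case 0 then show ?case by simp
next
  case (Suc k)
  have df: "f differentiable_on U" using Suc.prems by auto
  have inv: "C_on k U (\<lambda>x. inverse (f x))" using Suc C_on_Suc_imp by blast
  have "(\<lambda>x. inverse (f x)) differentiable at x" if "x \<in> U" for x
    using differentiable_inverse[OF differentiable_on_open_imp_at[OF assms(1) df that] assms(2)[OF that]] .
  then have "(\<lambda>x. inverse (f x)) differentiable_on U"
    by (rule differentiable_at_imp_differentiable_on)
  moreover have "C_on k U (dirD v (\<lambda>x. inverse (f x)))" for v
  proof (rule C_on_cong_open[OF assms(1)])
    have "C_on k U (dirD v f)" using Suc.prems by simp
    then have "C_on k U (\<lambda>x. inverse (f x) * dirD v f x * inverse (f x))"
      using C_on_bounded_bilinear[OF assms(1) bounded_bilinear_mult] inv by blast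
    then show "C_on k U (\<lambda>x. - (inverse (f x) * dirD v f x * inverse (f x)))"
      using C_on_bounded_linear[OF assms(1) bounded_linear_minus[OF bounded_linear_ident]] by auto
    fix x assume x: "x \<in> U"
    show "- (inverse (f x) * dirD v f x * inverse (f x)) = dirD v (\<lambda>x. inverse (f x)) x"
      using dirD_inverse[OF differentiable_on_open_imp_at[OF assms(1) df x] assms(2)[OF x]] by simp
  qed
  ultimately show ?case by simp
qed

lemma Cinf_on_add: "open U \<Longrightarrow> Cinf_on U f \<Longrightarrow> Cinf_on U g \<Longrightarrow> Cinf_on U (\<lambda>x. f x + g x)"
  unfolding Cinf_on_def using C_on_add by blast

lemma Cinf_on_bounded_linear:
  "open U \<Longrightarrow> bounded_linear L \<Longrightarrow> Cinf_on U f \<Longrightarrow> Cinf_on U (\<lambda>x. L (f x))"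
  unfolding Cinf_on_def using C_on_bounded_linear by blast

lemma Cinf_on_bounded_bilinear:
  "open U \<Longrightarrow> bounded_bilinear bp \<Longrightarrow> Cinf_on U f \<Longrightarrow> Cinf_on U g \<Longrightarrow> Cinf_on U (\<lambda>x. bp (f x) (g x))"
  unfolding Cinf_on_def using C_on_bounded_bilinear by blast

lemma Cinf_on_const: "Cinf_on U (\<lambda>x. c)"
  unfolding Cinf_on_def using C_on_const by blast

lemma Cinf_on_inverse:
  fixes f :: "complex \<Rightarrow> 'b::real_normed_field"
  shows "open U \<Longrightarrow> (\<And>x. x \<in> U \<Longrightarrow> f x \<noteq> 0) \<Longrightarrow> Cinf_on U f \<Longrightarrow> Cinf_on U (\<lambda>x. inverse (f x))"
  unfolding Cinf_on_def using C_on_inverse by blast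

lemma Cinf_on_diff: "open U \<Longrightarrow> Cinf_on U f \<Longrightarrow> Cinf_on U g \<Longrightarrow> Cinf_on U (\<lambda>x. f x - g x)"
  using Cinf_on_add[of U f "\<lambda>x. - g x"]
    Cinf_on_bounded_linear[OF _ bounded_linear_minus[OF bounded_linear_ident], of U g] by simp

lemma Cinf_on_mult:
  fixes f g :: "complex \<Rightarrow> 'b::real_normed_algebra"
  shows "open U \<Longrightarrow> Cinf_on U f \<Longrightarrow> Cinf_on U g \<Longrightarrow> Cinf_on U (\<lambda>x. f x * g x)"
  using Cinf_on_bounded_bilinear[OF _ bounded_bilinear_mult] by blast

section \<open>Symmetry of second directional derivatives\<close>

lemma second_difference_bound:
  fixes f :: "complex \<Rightarrow> 'b::real_normed_vector"
  assumes U: "open U" and df: "f differentiable_on U" and s: "s \<ge> 0"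
    and inU: "\<And>t. t \<in> {0..s} \<Longrightarrow> p + t *\<^sub>R u + s *\<^sub>R v \<in> U \<and> p + t *\<^sub>R u \<in> U"
    and bound: "\<And>t. t \<in> {0..s} \<Longrightarrow>
      norm (dirD u f (p + t *\<^sub>R u + s *\<^sub>R v) - dirD u f (p + t *\<^sub>R u) - w) \<le> B"
  shows "norm (f (p + s *\<^sub>R u + s *\<^sub>R v) - f (p + s *\<^sub>R u) - f (p + s *\<^sub>R v) + f p - s *\<^sub>R w) \<le> B * s"
proof -
  define g where "g t = f (p + t *\<^sub>R u + s *\<^sub>R v) - f (p + t *\<^sub>R u) - t *\<^sub>R w" for t
  have line: "((\<lambda>t. f (a + t *\<^sub>R u)) has_derivative (\<lambda>h. h *\<^sub>R dirD u f (a + t *\<^sub>R u))) (at t within {0..s})"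
    if "a + t *\<^sub>R u \<in> U" for a t
  proof -
    have fd: "(f has_derivative frechet_derivative f (at (a + t *\<^sub>R u))) (at (a + t *\<^sub>R u))"
      using differentiable_on_open_imp_at[OF U df that] frechet_derivative_works by blast
    have "((\<lambda>t. a + t *\<^sub>R u) has_derivative (\<lambda>h. h *\<^sub>R u)) (at t within {0..s})"
      by (auto intro!: derivative_eq_intros)
    from has_derivative_compose[OF this fd] show ?thesis
      using linear_scale[OF has_derivative_linear[OF fd]] unfolding dirD_def by simp
  qed
  have "(g has_derivative (\<lambda>h. h *\<^sub>R (dirD u f (p + t *\<^sub>R u + s *\<^sub>R v) - dirD u f (p + t *\<^sub>R u) - w)))
      (at t within {0..s})" if t: "t \<in> {0..s}" for t
  proof -
    have "(p + s *\<^sub>R v) + t *\<^sub>R u \<in> U" "p + t *\<^sub>R u \<in> U"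
      using inU[OF t] by (simp_all add: algebra_simps)
    then have "((\<lambda>t. f ((p + s *\<^sub>R v) + t *\<^sub>R u) - f (p + t *\<^sub>R u) - t *\<^sub>R w) has_derivative
        (\<lambda>h. h *\<^sub>R dirD u f ((p + s *\<^sub>R v) + t *\<^sub>R u) - h *\<^sub>R dirD u f (p + t *\<^sub>R u) - h *\<^sub>R w))
        (at t within {0..s})"
      by (intro has_derivative_diff line) (auto intro!: derivative_eq_intros)
    then show ?thesis unfolding g_def by (simp add: algebra_simps scaleR_diff_right)
  qed
  moreover have "onorm (\<lambda>h. h *\<^sub>R (dirD u f (p + t *\<^sub>R u + s *\<^sub>R v) - dirD u f (p + t *\<^sub>R u) - w)) \<le> B"
    if "t \<in> {0..s}" for t
    using bound[OF that] by (simp add: onorm_scaleR_left onorm_id)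
  ultimately have "norm (g s - g 0) \<le> B * norm (s - 0)"
    by (intro differentiable_bound[where S="{0..s}"]) (use s in auto)
  then show ?thesis using s unfolding g_def by (simp add: algebra_simps)
qed

lemma second_difference_linearization:
  fixes f :: "complex \<Rightarrow> 'b::real_normed_vector"
  assumes U: "open U" and df: "f differentiable_on U" and lin: "linear L" and s: "s \<ge> 0" and e: "e \<ge> 0"
    and near: "\<And>w. norm w \<le> s * (norm u + norm v) \<Longrightarrow>
      p + w \<in> U \<and> norm (dirD u f (p + w) - dirD u f p - L w) \<le> e * norm w"
  shows "norm (f (p + s *\<^sub>R u + s *\<^sub>R v) - f (p + s *\<^sub>R u) - f (p + s *\<^sub>R v) + f p - (s^2) *\<^sub>R L v)
       \<le> e * (s^2) * (2 * norm u + norm v)"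
proof -
  have n1: "norm (t *\<^sub>R u + s *\<^sub>R v) \<le> s * (norm u + norm v)"
    and n2: "norm (t *\<^sub>R u) \<le> s * norm u" if "t \<in> {0..s}" for t
  proof -
    show "norm (t *\<^sub>R u) \<le> s * norm u" using that by (auto intro: mult_right_mono)
    then show "norm (t *\<^sub>R u + s *\<^sub>R v) \<le> s * (norm u + norm v)"
      using norm_triangle_ineq[of "t *\<^sub>R u" "s *\<^sub>R v"] s by (simp add: algebra_simps)
  qed
  have n2': "norm (t *\<^sub>R u) \<le> s * (norm u + norm v)" if "t \<in> {0..s}" for t
    using n2[OF that] s by (smt (verit) mult_left_mono norm_ge_zero)
  have "norm (f (p + s *\<^sub>R u + s *\<^sub>R v) - f (p + s *\<^sub>R u) - f (p + s *\<^sub>R v) + f p - s *\<^sub>R (s *\<^sub>R L v))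
    \<le> e * s * (2 * norm u + norm v) * s"
  proof (rule second_difference_bound[OF U df s])
    fix t assume t: "t \<in> {0..s}"
    show "p + t *\<^sub>R u + s *\<^sub>R v \<in> U \<and> p + t *\<^sub>R u \<in> U"
      using near[OF n1[OF t]] near[OF n2'[OF t]] by (simp add: add.assoc)
    have "dirD u f (p + t *\<^sub>R u + s *\<^sub>R v) - dirD u f (p + t *\<^sub>R u) - s *\<^sub>R L v =
       (dirD u f (p + (t *\<^sub>R u + s *\<^sub>R v)) - dirD u f p - L (t *\<^sub>R u + s *\<^sub>R v))
       - (dirD u f (p + t *\<^sub>R u) - dirD u f p - L (t *\<^sub>R u))"
      by (simp add: algebra_simps linear_add[OF lin] linear_scale[OF lin])
    also have "norm \<dots> \<le> e * norm (t *\<^sub>R u + s *\<^sub>R v) + e * norm (t *\<^sub>R u)"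
      using near[OF n1[OF t]] near[OF n2'[OF t]] by (smt (verit) norm_triangle_ineq4)
    also have "\<dots> \<le> e * (s * (norm u + norm v)) + e * (s * norm u)"
      using n1[OF t] n2[OF t] e by (intro add_mono mult_left_mono) auto
    finally show "norm (dirD u f (p + t *\<^sub>R u + s *\<^sub>R v) - dirD u f (p + t *\<^sub>R u) - s *\<^sub>R L v)
        \<le> e * s * (2 * norm u + norm v)" by (simp add: algebra_simps)
  qed
  then show ?thesis by (simp add: power2_eq_square algebra_simps)
qed

lemma second_difference_estimate:
  fixes f :: "complex \<Rightarrow> 'b::real_normed_vector"
  assumes U: "open U" "p \<in> U" and df: "f differentiable_on U"
    and L: "(dirD u f has_derivative L) (at p)" and e: "e > 0"
  shows "\<exists>d>0. \<forall>s. 0 < s \<and> s < d \<longrightarrow>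
     norm (f (p + s *\<^sub>R u + s *\<^sub>R v) - f (p + s *\<^sub>R u) - f (p + s *\<^sub>R v) + f p - (s^2) *\<^sub>R L v)
       \<le> e * (s^2) * (2 * norm u + norm v)"
proof -
  obtain r where r: "r > 0" "ball p r \<subseteq> U" using U openE by blast
  obtain d1 where d1: "d1 > 0" "\<And>y. norm (y - p) < d1 \<Longrightarrow>
      norm (dirD u f y - dirD u f p - L (y - p)) \<le> e * norm (y - p)"
    using L e unfolding has_derivative_at_alt by blast
  define d where "d = min d1 r / (norm u + norm v + 1)"
  have den: "norm u + norm v + 1 > 0" by (smt (verit) norm_ge_zero)
  have "norm (f (p + s *\<^sub>R u + s *\<^sub>R v) - f (p + s *\<^sub>R u) - f (p + s *\<^sub>R v) + f p - (s^2) *\<^sub>R L v)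
       \<le> e * (s^2) * (2 * norm u + norm v)" if s: "0 < s" "s < d" for s
  proof (rule second_difference_linearization[OF U(1) df has_derivative_linear[OF L]])
    fix w :: complex assume w: "norm w \<le> s * (norm u + norm v)"
    have "s * (norm u + norm v) < d * (norm u + norm v + 1)"
      using s den by (smt (verit) mult_left_mono mult_strict_right_mono norm_ge_zero)
    then have "norm w < min d1 r" using w den by (simp add: d_def)
    then show "p + w \<in> U \<and> norm (dirD u f (p + w) - dirD u f p - L w) \<le> e * norm w"
      using d1(2)[of "p + w"] r by (auto simp: dist_norm)
  qed (use s e in auto)
  moreover have "d > 0" using d1 r den by (simp add: d_def)
  ultimately show ?thesis by blast
qed

lemma dirD_commute:
  fixes f :: "complex \<Rightarrow> 'b::real_normed_vector"
  assumes U: "open U" "p \<in> U" and df: "f differentiable_on U"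
    and du: "dirD u f differentiable (at p)" and dv: "dirD v f differentiable (at p)"
  shows "dirD v (dirD u f) p = dirD u (dirD v f) p"
proof -
  obtain L where L: "(dirD u f has_derivative L) (at p)" using du unfolding differentiable_def by blast
  obtain M where M: "(dirD v f has_derivative M) (at p)" using dv unfolding differentiable_def by blast
  have bound: "norm (L v - M u) \<le> e * (3 * (norm u + norm v))" if e: "e > 0" for e
  proof -
    obtain d1 where d1: "d1 > 0" "\<And>s. 0 < s \<and> s < d1 \<Longrightarrow>
      norm (f (p + s *\<^sub>R u + s *\<^sub>R v) - f (p + s *\<^sub>R u) - f (p + s *\<^sub>R v) + f p - (s^2) *\<^sub>R L v)
       \<le> e * (s^2) * (2 * norm u + norm v)"
      using second_difference_estimate[OF U df L e, of v] by blast
    obtain d2 where d2: "d2 > 0" "\<And>s. 0 < s \<and> s < d2 \<Longrightarrow>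
      norm (f (p + s *\<^sub>R v + s *\<^sub>R u) - f (p + s *\<^sub>R v) - f (p + s *\<^sub>R u) + f p - (s^2) *\<^sub>R M u)
       \<le> e * (s^2) * (2 * norm v + norm u)"
      using second_difference_estimate[OF U df M e, of u] by blast
    define s where "s = min d1 d2 / 2"
    have s: "0 < s" "s < d1" "s < d2" using d1 d2 by (auto simp: s_def)
    define X where "X = f (p + s *\<^sub>R u + s *\<^sub>R v) - f (p + s *\<^sub>R u) - f (p + s *\<^sub>R v) + f p"
    have a: "norm (X - (s^2) *\<^sub>R L v) \<le> e * (s^2) * (2 * norm u + norm v)"
      using d1(2)[of s] s unfolding X_def by simp
    have b: "norm (X - (s^2) *\<^sub>R M u) \<le> e * (s^2) * (2 * norm v + norm u)"
      using d2(2)[of s] s unfolding X_def by (simp add: algebra_simps)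
    have "(s^2) * norm (L v - M u) = norm ((X - (s^2) *\<^sub>R M u) - (X - (s^2) *\<^sub>R L v))"
      by (simp add: algebra_simps flip: scaleR_diff_right)
    also have "\<dots> \<le> norm (X - (s^2) *\<^sub>R M u) + norm (X - (s^2) *\<^sub>R L v)"
      by (rule norm_triangle_ineq4)
    also have "\<dots> \<le> e * (s^2) * (2 * norm v + norm u) + e * (s^2) * (2 * norm u + norm v)"
      using add_mono[OF b a] .
    also have "\<dots> = (s^2) * (e * (3 * (norm u + norm v)))" by (simp add: algebra_simps)
    finally show ?thesis using s by (simp add: mult_le_cancel_left_pos)
  qed
  have "norm (L v - M u) \<le> 0 + e" if e: "e > 0" for e
  proof -
    define C where "C = 3 * (norm u + norm v)"
    have C: "C \<ge> 0" unfolding C_def by simp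
    have "e / (C + 1) > 0" using e C by simp
    from bound[OF this] have "norm (L v - M u) \<le> e / (C + 1) * C" unfolding C_def .
    also have "\<dots> \<le> e" using e C by (simp add: field_simps)
    finally show ?thesis by simp
  qed
  then have "norm (L v - M u) \<le> 0" by (rule field_le_epsilon)
  then show ?thesis using dirD_eqI[OF L] dirD_eqI[OF M] by simp
qed

lemma cbil_comm: "cbil a b = cbil b a"
  unfolding cbil_def by (simp add: mult.commute)

lemma cbil_add1[simp]: "cbil (a + b) c = cbil a c + cbil b c"
  unfolding cbil_def by (simp add: distrib_right sum.distrib)
lemma cbil_add2[simp]: "cbil c (a + b) = cbil c a + cbil c b"
  unfolding cbil_def by (simp add: distrib_left sum.distrib)
lemma cbil_diff1[simp]: "cbil (a - b) c = cbil a c - cbil b c"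
  unfolding cbil_def by (simp add: left_diff_distrib sum_subtractf)
lemma cbil_diff2[simp]: "cbil c (a - b) = cbil c a - cbil c b"
  unfolding cbil_def by (simp add: right_diff_distrib sum_subtractf)
lemma cbil_minus1[simp]: "cbil (- a) c = - cbil a c"
  unfolding cbil_def by (simp add: sum_negf)
lemma cbil_minus2[simp]: "cbil c (- a) = - cbil c a"
  unfolding cbil_def by (simp add: sum_negf)
lemma cbil_smult1[simp]: "cbil (k *s a) c = k * cbil a c"
  unfolding cbil_def by (simp add: sum_distrib_left mult.assoc)
lemma cbil_smult2[simp]: "cbil c (k *s a) = k * cbil c a"
  unfolding cbil_def by (simp add: sum_distrib_left mult.left_commute)

lemma cbil_cvec: "cbil (cvec a) (cvec b) = complex_of_real (a \<bullet> b)"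
  unfolding cbil_def cvec_def inner_vec_def by simp

lemma bounded_bilinear_cbil: "bounded_bilinear cbil"
proof -
  have scaleR: "cbil (r *\<^sub>R a) c = r *\<^sub>R cbil a c" "cbil c (r *\<^sub>R a) = r *\<^sub>R cbil c a" for r a c
    unfolding cbil_def by (simp_all add: scaleR_sum_right)
  have "bilinear cbil"
    unfolding bilinear_def
  proof (intro conjI allI)
    fix x :: "complex^5"
    show "linear (cbil x)" "linear (\<lambda>y. cbil y x)"
      by (rule linearI; simp add: scaleR)+
  qed
  then show ?thesis using bilinear_conv_bounded_bilinear by blast
qed

lemma bounded_bilinear_vec_smult: "bounded_bilinear (\<lambda>(c::complex) (v::complex^'n). c *s v)"
proof -
  have scaleR: "r *\<^sub>R z = complex_of_real r * z" for r z
    by (rule scaleR_conv_of_real)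
  have "bilinear (\<lambda>(c::complex) (v::complex^'n). c *s v)"
    unfolding bilinear_def
  proof (intro conjI allI)
    fix x :: complex and y :: "complex^'n"
    show "linear (\<lambda>v::complex^'n. x *s v)" "linear (\<lambda>c::complex. c *s y)"
      by (rule linearI; simp add: vec_eq_iff scaleR algebra_simps)+
  qed
  then show ?thesis using bilinear_conv_bounded_bilinear by blast
qed

lemma bounded_linear_cvec: "bounded_linear cvec"
proof -
  have scaleR: "r *\<^sub>R z = complex_of_real r * z" for r z
    by (rule scaleR_conv_of_real)
  have "linear cvec"
    by (rule linearI) (simp_all add: cvec_def vec_eq_iff scaleR)
  then show ?thesis using linear_conv_bounded_linear by blast
qed

lemma Cinf_on_cbil: "open U \<Longrightarrow> Cinf_on U f \<Longrightarrow> Cinf_on U g \<Longrightarrow> Cinf_on U (\<lambda>x. cbil (f x) (g x))"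
  using Cinf_on_bounded_bilinear[OF _ bounded_bilinear_cbil] by blast

lemma Cinf_on_vec_smult:
  "open U \<Longrightarrow> Cinf_on U c \<Longrightarrow> Cinf_on U (f :: complex \<Rightarrow> complex^'n) \<Longrightarrow> Cinf_on U (\<lambda>x. c x *s f x)"
  using Cinf_on_bounded_bilinear[OF _ bounded_bilinear_vec_smult, of U c f] by simp

lemma Cinf_on_cvec: "open U \<Longrightarrow> Cinf_on U f \<Longrightarrow> Cinf_on U (\<lambda>x. cvec (f x))"
  using Cinf_on_bounded_linear[OF _ bounded_linear_cvec] by blast

definition dzbs :: "(complex \<Rightarrow> complex) \<Rightarrow> complex \<Rightarrow> complex" where
  "dzbs f p = (dirD 1 f p + \<i> * dirD \<i> f p) / 2"

lemma dzv_cong_open: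
  assumes "open U" "q \<in> U" "\<And>x. x \<in> U \<Longrightarrow> f x = g x" shows "dzv f q = dzv g q"
  unfolding dzv_def by (simp add: dirD_cong_open[OF assms])
lemma dzbv_cong_open:
  assumes "open U" "q \<in> U" "\<And>x. x \<in> U \<Longrightarrow> f x = g x" shows "dzbv f q = dzbv g q"
  unfolding dzbv_def by (simp add: dirD_cong_open[OF assms])
lemma dzs_cong_open:
  assumes "open U" "q \<in> U" "\<And>x. x \<in> U \<Longrightarrow> f x = g x" shows "dzs f q = dzs g q"
  unfolding dzs_def by (simp add: dirD_cong_open[OF assms])
lemma dzbs_cong_open:
  assumes "open U" "q \<in> U" "\<And>x. x \<in> U \<Longrightarrow> f x = g x" shows "dzbs f q = dzbs g q"
  unfolding dzbs_def by (simp add: dirD_cong_open[OF assms])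

lemma dzs_cbil:
  assumes "f differentiable (at q)" "g differentiable (at q)"
  shows "dzs (\<lambda>x. cbil (f x) (g x)) q = cbil (dzv f q) (g q) + cbil (f q) (dzv g q)"
  unfolding dzs_def dzv_def dirD_bounded_bilinear[OF bounded_bilinear_cbil assms]
  by (simp add: cbil_comm[of "f q"] field_simps)

lemma dzbs_cbil:
  assumes "f differentiable (at q)" "g differentiable (at q)"
  shows "dzbs (\<lambda>x. cbil (f x) (g x)) q = cbil (dzbv f q) (g q) + cbil (f q) (dzbv g q)"
  unfolding dzbs_def dzbv_def dirD_bounded_bilinear[OF bounded_bilinear_cbil assms]
  by (simp add: cbil_comm[of "f q"] field_simps)

lemma dzv_smult:
  assumes "c differentiable (at q)" "f differentiable (at q)"
  shows "dzv (\<lambda>x. c x *s f x) q = dzs c q *s f q + c q *s dzv f q"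
  unfolding dzs_def dzv_def dirD_bounded_bilinear[OF bounded_bilinear_vec_smult assms]
  by (simp add: vec_eq_iff field_simps)

lemma dzbv_smult:
  assumes "c differentiable (at q)" "f differentiable (at q)"
  shows "dzbv (\<lambda>x. c x *s f x) q = dzbs c q *s f q + c q *s dzbv f q"
  unfolding dzbs_def dzbv_def dirD_bounded_bilinear[OF bounded_bilinear_vec_smult assms]
  by (simp add: vec_eq_iff field_simps)

lemma dzs_mult:
  assumes "a differentiable (at q)" "b differentiable (at q)"
  shows "dzs (\<lambda>x. a x * b x) q = dzs a q * b q + a q * dzs b q"
  unfolding dzs_def dirD_bounded_bilinear[OF bounded_bilinear_mult assms]
  by (simp add: field_simps)

lemma dzv_add:
  assumes "f differentiable (at q)" "g differentiable (at q)"
  shows "dzv (\<lambda>x. f x + g x) q = dzv f q + dzv g q"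
  unfolding dzv_def dirD_add[OF assms] by (simp add: vec_eq_iff field_simps)

lemma dzv_diff:
  assumes "f differentiable (at q)" "g differentiable (at q)"
  shows "dzv (\<lambda>x. f x - g x) q = dzv f q - dzv g q"
  unfolding dzv_def dirD_diff[OF assms] by (simp add: vec_eq_iff field_simps)

lemma dzbv_diff:
  assumes "f differentiable (at q)" "g differentiable (at q)"
  shows "dzbv (\<lambda>x. f x - g x) q = dzbv f q - dzbv g q"
  unfolding dzbv_def dirD_diff[OF assms] by (simp add: vec_eq_iff field_simps)

lemma dzv_const[simp]: "dzv (\<lambda>x. c) q = 0"
  unfolding dzv_def dirD_const by simp
lemma dzs_const[simp]: "dzs (\<lambda>x. c) q = 0"
  unfolding dzs_def dirD_const by simp
lemma dzbs_const[simp]: "dzbs (\<lambda>x. c) q = 0"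
  unfolding dzbs_def dirD_const by simp

lemma dzs_inverse:
  assumes "f differentiable (at q)" "f q \<noteq> 0"
  shows "dzs (\<lambda>x. inverse (f x)) q = - dzs f q / (f q)^2"
  unfolding dzs_def dirD_inverse[OF assms] using assms(2)
  by (simp add: field_simps power2_eq_square)

lemma dzs_locally_const: "open U \<Longrightarrow> q \<in> U \<Longrightarrow> (\<And>x. x \<in> U \<Longrightarrow> f x = c) \<Longrightarrow> dzs f q = 0"
  using dzs_cong_open[of U q f "\<lambda>x. c"] by simp
lemma dzbs_locally_const: "open U \<Longrightarrow> q \<in> U \<Longrightarrow> (\<And>x. x \<in> U \<Longrightarrow> f x = c) \<Longrightarrow> dzbs f q = 0"
  using dzbs_cong_open[of U q f "\<lambda>x. c"] by simp

lemma Cinf_on_dzv: "open U \<Longrightarrow> Cinf_on U f \<Longrightarrow> Cinf_on U (dzv f)"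
  unfolding dzv_def[abs_def]
  by (intro Cinf_on_vec_smult Cinf_on_diff Cinf_on_const Cinf_on_dirD)
lemma Cinf_on_dzbv: "open U \<Longrightarrow> Cinf_on U f \<Longrightarrow> Cinf_on U (dzbv f)"
  unfolding dzbv_def[abs_def]
  by (intro Cinf_on_vec_smult Cinf_on_add Cinf_on_const Cinf_on_dirD)
lemma Cinf_on_dzs: "open U \<Longrightarrow> Cinf_on U f \<Longrightarrow> Cinf_on U (dzs f)"
  unfolding dzs_def[abs_def] divide_complex_def
  by (intro Cinf_on_mult Cinf_on_diff Cinf_on_const Cinf_on_dirD)

lemma dzbv_dzv_commute:
  assumes U: "open U" "q \<in> U" and f: "Cinf_on U f"
  shows "dzbv (dzv f) q = dzv (dzbv f) q"
proof -
  have d1: "dirD 1 f differentiable (at q)" and di: "dirD \<i> f differentiable (at q)"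
    using Cinf_on_differentiable_at[OF U(1) Cinf_on_dirD[OF f] U(2)] by auto
  have lin: "bounded_linear (\<lambda>y::complex^5. c *s y)" for c
    using bounded_bilinear.bounded_linear_right[OF bounded_bilinear_vec_smult] by blast
  have di': "(\<lambda>x. \<i> *s dirD \<i> f x) differentiable (at q)"
    using differentiable_compose[OF bounded_linear_imp_differentiable[OF lin] di] by (simp add: o_def)
  have D: "dirD v (dzv f) q = (1/2::complex) *s (dirD v (dirD 1 f) q - \<i> *s dirD v (dirD \<i> f) q)"
    "dirD v (dzbv f) q = (1/2::complex) *s (dirD v (dirD 1 f) q + \<i> *s dirD v (dirD \<i> f) q)" for v
    unfolding dzv_def[abs_def] dzbv_def[abs_def]
      dirD_bounded_linear[OF lin differentiable_diff[OF d1 di']]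
      dirD_bounded_linear[OF lin differentiable_add[OF d1 di']]
      dirD_diff[OF d1 di'] dirD_add[OF d1 di'] dirD_bounded_linear[OF lin di] by simp_all
  have "dirD \<i> (dirD 1 f) q = dirD 1 (dirD \<i> f) q"
    using dirD_commute[OF U Cinf_on_differentiable_on[OF f] d1 di] .
  then show ?thesis
    unfolding dzbv_def[of "dzv f"] dzv_def[of "dzbv f"] D by (simp add: vec_eq_iff field_simps)
qed

lemma orthogonal_to_basis_imp_zero:
  fixes z :: "'a::euclidean_space"
  assumes "pairwise orthogonal B" "0 \<notin> B" "card B = DIM('a)" "\<And>v. v \<in> B \<Longrightarrow> z \<bullet> v = 0"
  shows "z = 0"
proof (rule ccontr)
  assume z: "z \<noteq> 0"
  have fin: "finite B" using assms(3) card_ge_0_finite[of B] by simp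
  have "z \<notin> B" using assms(4) z by force
  have "pairwise orthogonal (insert z B)"
    using assms(1,4) unfolding pairwise_insert orthogonal_def by (simp add: inner_commute)
  then have "independent (insert z B)"
    using pairwise_orthogonal_independent assms(2) z by blast
  then have "card (insert z B) \<le> DIM('a)" using independent_bound by blast
  then show False using fin \<open>z \<notin> B\<close> assms(3) by simp
qed

lemma cvec_orthogonal_imp_zero:
  assumes "\<And>v. v \<in> B \<Longrightarrow> cbil w (cvec v) = 0"
    and "\<And>z. (\<And>v. v \<in> B \<Longrightarrow> z \<bullet> v = 0) \<Longrightarrow> z = 0"
  shows "w = 0"
proof -
  define wr where "wr = (\<chi> j. Re (w $ j))"
  define wi where "wi = (\<chi> j. Im (w $ j))"
  have "Re (cbil w (cvec v)) = wr \<bullet> v" "Im (cbil w (cvec v)) = wi \<bullet> v" for v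
    unfolding cbil_def cvec_def wr_def wi_def inner_vec_def by (simp_all add: Re_sum Im_sum)
  then have "wr = 0" "wi = 0" using assms by (metis zero_complex.simps)+
  then show "w = 0" unfolding wr_def wi_def by (simp add: vec_eq_iff complex_eq_iff)
qed

section \<open>Structure equations of a conformal immersion into the sphere\<close>

locale conformal_chart =
  fixes U :: "complex set" and \<Phi> n1 n2 :: "complex \<Rightarrow> real^5"
  assumes conformal: "conformal_immersion_S4 U \<Phi>"
    and frame: "oriented_normal_frame U \<Phi> n1 n2"
begin

text \<open>\<open>P, X, Y\<close> are \<open>\<Phi>, \<Phi>_x, \<Phi>_y\<close> in \<open>\<complex>\<^sup>5\<close>; \<open>Pz, Pb, Pzz, Pzb\<close> are
  \<open>\<Phi>_z, \<Phi>_zbar, \<Phi>_zz, \<Phi>_zzbar\<close> and \<open>E\<close> is \<open>e\<^sup>2\<^sup>\<lambda>\<close>.\<close>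

definition "P = Phic \<Phi>"
definition "X q = cvec (dirD 1 \<Phi> q)"
definition "Y q = cvec (dirD \<i> \<Phi> q)"

abbreviation "E \<equiv> e2lam \<Phi>"
abbreviation "Ez \<equiv> dzs E"
abbreviation "Pz \<equiv> dzv P"
abbreviation "Pb \<equiv> dzbv P"
abbreviation "Pzz \<equiv> dzv Pz"
abbreviation "Pzb \<equiv> dzv Pb"
abbreviation "h \<equiv> h0 \<Phi>"
abbreviation "H \<equiv> Hvec \<Phi>"
abbreviation "npj \<equiv> nproj \<Phi>"

lemma open_U: "open U"
  using conformal unfolding conformal_immersion_S4_def by blast

lemma Cinf_on_imp_differentiable_at: "Cinf_on U f \<Longrightarrow> q \<in> U \<Longrightarrow> f differentiable (at q)"
  using Cinf_on_differentiable_at[OF open_U] by blast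

lemma Cinf_on_Phi: "Cinf_on U \<Phi>"
  using conformal smooth_on_imp_Cinf_on unfolding conformal_immersion_S4_def by blast

lemma P_eq: "P = (\<lambda>q. cvec (\<Phi> q))"
  unfolding P_def Phic_def by blast

lemma Cinf_on_P: "Cinf_on U P"
  unfolding P_eq using Cinf_on_cvec[OF open_U Cinf_on_Phi] .
lemma Cinf_on_X: "Cinf_on U X"
  unfolding X_def[abs_def] using Cinf_on_cvec[OF open_U Cinf_on_dirD[OF Cinf_on_Phi]] .
lemma Cinf_on_Y: "Cinf_on U Y"
  unfolding Y_def[abs_def] using Cinf_on_cvec[OF open_U Cinf_on_dirD[OF Cinf_on_Phi]] .

lemma E_eq: "E q = cbil (X q) (X q)"
  unfolding e2lam_def X_def cbil_cvec by (simp add: power2_norm_eq_inner)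

lemma E_nonzero: "q \<in> U \<Longrightarrow> E q \<noteq> 0"
  using conformal unfolding conformal_immersion_S4_def e2lam_def by auto

lemma Cinf_on_E: "Cinf_on U E"
  unfolding E_eq[abs_def] using Cinf_on_cbil[OF open_U Cinf_on_X Cinf_on_X] .
lemma Cinf_on_inverse_E: "Cinf_on U (\<lambda>q. inverse (E q))"
  using Cinf_on_inverse[OF open_U E_nonzero Cinf_on_E] by blast

lemma Cinf_on_Pz: "Cinf_on U Pz" using Cinf_on_dzv[OF open_U Cinf_on_P] .
lemma Cinf_on_Pb: "Cinf_on U Pb" using Cinf_on_dzbv[OF open_U Cinf_on_P] .
lemma Cinf_on_Pzz: "Cinf_on U Pzz" using Cinf_on_dzv[OF open_U Cinf_on_Pz] .
lemma Cinf_on_Pzb: "Cinf_on U Pzb" using Cinf_on_dzv[OF open_U Cinf_on_Pb] .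
lemma Cinf_on_Ez: "Cinf_on U Ez" using Cinf_on_dzs[OF open_U Cinf_on_E] .

lemma dirD_P: "q \<in> U \<Longrightarrow> dirD v P q = cvec (dirD v \<Phi> q)"
  unfolding P_eq using dirD_bounded_linear[OF bounded_linear_cvec Cinf_on_imp_differentiable_at[OF Cinf_on_Phi]] .

lemma Pz_eq: "q \<in> U \<Longrightarrow> Pz q = (1/2::complex) *s (X q - \<i> *s Y q)"
  unfolding dzv_def X_def Y_def using dirD_P by simp
lemma Pb_eq: "q \<in> U \<Longrightarrow> Pb q = (1/2::complex) *s (X q + \<i> *s Y q)"
  unfolding dzbv_def X_def Y_def using dirD_P by simp
lemma X_eq: "q \<in> U \<Longrightarrow> X q = Pz q + Pb q"
  by (simp add: Pz_eq Pb_eq vec_eq_iff field_simps)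
lemma Y_eq: "q \<in> U \<Longrightarrow> Y q = \<i> *s (Pz q - Pb q)"
  by (simp add: Pz_eq Pb_eq vec_eq_iff field_simps)

lemma cbil_P_P: "q \<in> U \<Longrightarrow> cbil (P q) (P q) = 1"
  using conformal unfolding conformal_immersion_S4_def P_eq cbil_cvec
  by (simp add: power2_norm_eq_inner[symmetric])

lemma conformality:
  assumes "q \<in> U"
  shows "cbil (X q) (X q) = E q" "cbil (Y q) (Y q) = E q" "cbil (X q) (Y q) = 0"
proof -
  have c: "norm (dirD 1 \<Phi> q) = norm (dirD \<i> \<Phi> q)" "dirD 1 \<Phi> q \<bullet> dirD \<i> \<Phi> q = 0"
    using conformal assms unfolding conformal_immersion_S4_def by auto
  show "cbil (X q) (X q) = E q" using E_eq by simp
  show "cbil (Y q) (Y q) = E q" "cbil (X q) (Y q) = 0"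
    unfolding E_eq X_def Y_def cbil_cvec using c by (simp_all add: power2_norm_eq_inner[symmetric])
qed

lemma cbil_Pz_Pb:
  assumes "q \<in> U"
  shows "cbil (Pz q) (Pz q) = 0" "cbil (Pb q) (Pb q) = 0" "cbil (Pz q) (Pb q) = E q / 2"
  using conformality[OF assms] cbil_comm[of "Y q" "X q"] unfolding Pz_eq[OF assms] Pb_eq[OF assms]
  by (simp_all add: field_simps)

lemma cbil_P_Pz:
  assumes q: "q \<in> U" shows "cbil (P q) (Pz q) = 0" "cbil (P q) (Pb q) = 0"
proof -
  have dP: "P differentiable (at q)" using Cinf_on_imp_differentiable_at[OF Cinf_on_P q] .
  have "dzs (\<lambda>x. cbil (P x) (P x)) q = 0"
    by (rule dzs_locally_const[OF open_U q]) (rule cbil_P_P)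
  moreover have "dzbs (\<lambda>x. cbil (P x) (P x)) q = 0"
    by (rule dzbs_locally_const[OF open_U q]) (rule cbil_P_P)
  ultimately show "cbil (P q) (Pz q) = 0" "cbil (P q) (Pb q) = 0"
    unfolding dzs_cbil[OF dP dP] dzbs_cbil[OF dP dP] by (simp_all add: cbil_comm)
qed

lemmas first_order_products = cbil_P_P cbil_Pz_Pb cbil_P_Pz
  cbil_Pz_Pb(3)[unfolded cbil_comm[of "Pz _"]] cbil_P_Pz[unfolded cbil_comm[of "P _"]]

lemma nproj_eq:
  assumes "q \<in> U"
  shows "npj q v = v - cbil v (P q) *s P q - (2 / E q) *s (cbil v (Pb q) *s Pz q + cbil v (Pz q) *s Pb q)"
proof -
  have "npj q v = v - cbil v (P q) *s P q - (1 / E q) *s (cbil v (X q) *s X q + cbil v (Y q) *s Y q)"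
    unfolding nproj_def P_def X_def Y_def ..
  then show ?thesis
    unfolding X_eq[OF assms] Y_eq[OF assms] by (simp add: vec_eq_iff field_simps)
qed

definition normal_at :: "complex \<Rightarrow> complex^5 \<Rightarrow> bool" where
  "normal_at q v \<longleftrightarrow> cbil v (P q) = 0 \<and> cbil v (Pz q) = 0 \<and> cbil v (Pb q) = 0"

lemma normal_atD: "normal_at q u \<Longrightarrow> cbil (P q) u = 0 \<and> cbil (Pz q) u = 0 \<and> cbil (Pb q) u = 0"
  unfolding normal_at_def by (simp add: cbil_comm)

lemma normal_at_smult: "normal_at q v \<Longrightarrow> normal_at q (c *s v)"
  unfolding normal_at_def by simp
lemma normal_at_add: "normal_at q v \<Longrightarrow> normal_at q w \<Longrightarrow> normal_at q (v + w)"
  unfolding normal_at_def by simp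
lemma normal_at_diff: "normal_at q v \<Longrightarrow> normal_at q w \<Longrightarrow> normal_at q (v - w)"
  unfolding normal_at_def by simp

lemma nproj_normal: "q \<in> U \<Longrightarrow> normal_at q v \<Longrightarrow> npj q v = v"
  unfolding nproj_eq normal_at_def by simp

lemma normal_at_nproj: "q \<in> U \<Longrightarrow> normal_at q (npj q v)"
  unfolding normal_at_def nproj_eq using first_order_products E_nonzero
  by (simp add: field_simps)

lemma cbil_normal_nproj: "q \<in> U \<Longrightarrow> normal_at q u \<Longrightarrow> cbil u (npj q v) = cbil u v"
  unfolding nproj_eq normal_at_def by simp

lemma nproj_add: "npj q (a + b) = npj q a + npj q b"
  unfolding nproj_def by (simp add: vec_eq_iff field_simps)
lemma nproj_diff: "npj q (a - b) = npj q a - npj q b"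
  unfolding nproj_def by (simp add: vec_eq_iff field_simps)
lemma nproj_smult: "npj q (c *s a) = c *s npj q a"
  unfolding nproj_def by (simp add: vec_eq_iff field_simps)

lemma nproj_tangent: "q \<in> U \<Longrightarrow> npj q (P q) = 0 \<and> npj q (Pz q) = 0 \<and> npj q (Pb q) = 0"
  unfolding nproj_eq using first_order_products E_nonzero
  by (simp add: vec_eq_iff field_simps)

lemma Cinf_on_nproj: "Cinf_on U v \<Longrightarrow> Cinf_on U (\<lambda>q. npj q (v q))"
proof -
  assume v: "Cinf_on U v"
  have "(\<lambda>q. npj q (v q)) = (\<lambda>q. v q - cbil (v q) (P q) *s P q
     - inverse (E q) *s (cbil (v q) (X q) *s X q + cbil (v q) (Y q) *s Y q))"
    unfolding nproj_def P_def X_def Y_def by (simp add: divide_inverse)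
  then show ?thesis
    by (simp only:) (intro Cinf_on_diff Cinf_on_vec_smult Cinf_on_add Cinf_on_cbil open_U v
        Cinf_on_P Cinf_on_X Cinf_on_Y Cinf_on_inverse_E)
qed

lemma dzbv_Pz: "q \<in> U \<Longrightarrow> dzbv Pz q = Pzb q"
  using dzbv_dzv_commute[OF open_U _ Cinf_on_P] .

lemma second_order_products:
  assumes q: "q \<in> U"
  shows "cbil (P q) (Pzz q) = 0" "cbil (Pz q) (Pzz q) = 0" "cbil (Pb q) (Pzb q) = 0"
    "cbil (Pz q) (Pzb q) = 0" "cbil (P q) (Pzb q) = - E q / 2" "cbil (Pb q) (Pzz q) = Ez q / 2"
proof -
  have dP: "P differentiable (at q)" and dPz: "Pz differentiable (at q)" and dPb: "Pb differentiable (at q)"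
    using Cinf_on_imp_differentiable_at[OF Cinf_on_P q] Cinf_on_imp_differentiable_at[OF Cinf_on_Pz q]
      Cinf_on_imp_differentiable_at[OF Cinf_on_Pb q] .
  note first = first_order_products[OF q]
  have "dzs (\<lambda>x. cbil (P x) (Pz x)) q = 0"
    by (rule dzs_locally_const[OF open_U q]) (simp add: first_order_products)
  then show "cbil (P q) (Pzz q) = 0" unfolding dzs_cbil[OF dP dPz] using first by simp
  have "dzs (\<lambda>x. cbil (Pz x) (Pz x)) q = 0"
    by (rule dzs_locally_const[OF open_U q]) (simp add: first_order_products)
  then show "cbil (Pz q) (Pzz q) = 0" unfolding dzs_cbil[OF dPz dPz] by (simp add: cbil_comm)
  have "dzs (\<lambda>x. cbil (Pb x) (Pb x)) q = 0"
    by (rule dzs_locally_const[OF open_U q]) (simp add: first_order_products)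
  then show "cbil (Pb q) (Pzb q) = 0" unfolding dzs_cbil[OF dPb dPb] by (simp add: cbil_comm)
  have "dzbs (\<lambda>x. cbil (Pz x) (Pz x)) q = 0"
    by (rule dzbs_locally_const[OF open_U q]) (simp add: first_order_products)
  then show PzPzb: "cbil (Pz q) (Pzb q) = 0"
    unfolding dzbs_cbil[OF dPz dPz] dzbv_Pz[OF q] by (simp add: cbil_comm)
  have "dzs (\<lambda>x. cbil (P x) (Pb x)) q = 0"
    by (rule dzs_locally_const[OF open_U q]) (simp add: first_order_products)
  then have "E q + 2 * cbil (P q) (Pzb q) = 0"
    unfolding dzs_cbil[OF dP dPb] using first by (simp add: field_simps)
  then show "cbil (P q) (Pzb q) = - E q / 2"
    by (simp add: field_simps eq_neg_iff_add_eq_0 add.commute)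
  have "dzs (\<lambda>x. cbil (Pz x) (Pb x)) q = dzs (\<lambda>x. E x * (1/2)) q"
    by (rule dzs_cong_open[OF open_U q]) (simp add: cbil_Pz_Pb(3))
  also have "\<dots> = Ez q / 2"
    using dzs_mult[OF Cinf_on_imp_differentiable_at[OF Cinf_on_E q], of "\<lambda>x. 1/2"] by simp
  finally show "cbil (Pb q) (Pzz q) = Ez q / 2"
    unfolding dzs_cbil[OF dPz dPb] using PzPzb by (simp add: cbil_comm)
qed

lemma h0_eq: "q \<in> U \<Longrightarrow> h q = 2 *s Pzz q - (2 * Ez q / E q) *s Pz q"
  unfolding h0_def P_def[symmetric] nproj_eq
  using second_order_products cbil_comm[of "Pzz q"] E_nonzero
  by (simp add: vec_eq_iff field_simps)

lemma Hvec_eq: "q \<in> U \<Longrightarrow> H q = (2 / E q) *s Pzb q + P q"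
  unfolding Hvec_def P_def[symmetric] nproj_eq
  using second_order_products cbil_comm[of "Pzb q"] E_nonzero
  by (simp add: vec_eq_iff field_simps)

lemma gauss_Pzz: "q \<in> U \<Longrightarrow> Pzz q = (Ez q / E q) *s Pz q + (1/2::complex) *s h q"
  using h0_eq E_nonzero by (simp add: vec_eq_iff field_simps)

lemma gauss_Pzb: "q \<in> U \<Longrightarrow> Pzb q = (E q / 2) *s (H q - P q)"
  using Hvec_eq E_nonzero by (simp add: vec_eq_iff field_simps)

lemma normal_at_h: "q \<in> U \<Longrightarrow> normal_at q (h q)"
  unfolding h0_def using normal_at_smult[OF normal_at_nproj] .
lemma normal_at_H: "q \<in> U \<Longrightarrow> normal_at q (H q)"
  unfolding Hvec_def using normal_at_smult[OF normal_at_nproj] .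

lemma Cinf_on_h: "Cinf_on U h"
proof -
  have "Cinf_on U (\<lambda>q. (\<lambda>x. 2) q *s npj q (Pzz q))"
    by (intro Cinf_on_vec_smult Cinf_on_const Cinf_on_nproj Cinf_on_Pzz open_U)
  then show ?thesis unfolding h0_def[abs_def] P_def by simp
qed

lemma Cinf_on_H: "Cinf_on U H"
proof -
  have "Cinf_on U (\<lambda>q. (2 * inverse (E q)) *s npj q (Pzb q))"
    by (intro Cinf_on_vec_smult Cinf_on_mult Cinf_on_const Cinf_on_inverse_E Cinf_on_nproj Cinf_on_Pzb open_U)
  then show ?thesis unfolding Hvec_def[abs_def] P_def by (simp add: divide_inverse)
qed

definition normal_field :: "(complex \<Rightarrow> complex^5) \<Rightarrow> bool" where
  "normal_field \<xi> \<longleftrightarrow> Cinf_on U \<xi> \<and> (\<forall>x\<in>U. normal_at x (\<xi> x))"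

lemma normal_field_h: "normal_field h"
  unfolding normal_field_def using Cinf_on_h normal_at_h by blast

lemma normal_field_H: "normal_field H"
  unfolding normal_field_def using Cinf_on_H normal_at_H by blast

lemma normal_field_nproj: "Cinf_on U v \<Longrightarrow> normal_field (\<lambda>q. npj q (v q))"
  unfolding normal_field_def using Cinf_on_nproj normal_at_nproj by blast

lemma weingarten:
  assumes "normal_field \<xi>" and q: "q \<in> U"
  shows "dzv \<xi> q - npj q (dzv \<xi> q) = - cbil (\<xi> q) (H q) *s Pz q - (cbil (\<xi> q) (h q) / E q) *s Pb q"
proof -
  have \<xi>: "Cinf_on U \<xi>" "\<forall>x\<in>U. normal_at x (\<xi> x)" using assms(1) unfolding normal_field_def by auto
  have dx: "\<xi> differentiable (at q)" using Cinf_on_imp_differentiable_at[OF \<xi>(1) q] .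
  have dP: "P differentiable (at q)" and dPz: "Pz differentiable (at q)" and dPb: "Pb differentiable (at q)"
    using Cinf_on_imp_differentiable_at[OF Cinf_on_P q] Cinf_on_imp_differentiable_at[OF Cinf_on_Pz q]
      Cinf_on_imp_differentiable_at[OF Cinf_on_Pb q] .
  have n: "cbil (\<xi> q) (P q) = 0" "cbil (\<xi> q) (Pz q) = 0" "cbil (\<xi> q) (Pb q) = 0"
    using \<xi>(2) q unfolding normal_at_def by auto
  have "dzs (\<lambda>x. cbil (\<xi> x) (P x)) q = 0"
    by (rule dzs_locally_const[OF open_U q]) (use \<xi>(2) in \<open>simp add: normal_at_def\<close>)
  then have d1: "cbil (dzv \<xi> q) (P q) = 0" unfolding dzs_cbil[OF dx dP] using n by simp
  have "dzs (\<lambda>x. cbil (\<xi> x) (Pz x)) q = 0"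
    by (rule dzs_locally_const[OF open_U q]) (use \<xi>(2) in \<open>simp add: normal_at_def\<close>)
  then have "cbil (dzv \<xi> q) (Pz q) = - cbil (\<xi> q) (Pzz q)" unfolding dzs_cbil[OF dx dPz]
    by (simp add: eq_neg_iff_add_eq_0)
  also have "\<dots> = - cbil (\<xi> q) (h q) / 2" unfolding gauss_Pzz[OF q] using n by simp
  finally have d2: "cbil (dzv \<xi> q) (Pz q) = - cbil (\<xi> q) (h q) / 2" .
  have "dzs (\<lambda>x. cbil (\<xi> x) (Pb x)) q = 0"
    by (rule dzs_locally_const[OF open_U q]) (use \<xi>(2) in \<open>simp add: normal_at_def\<close>)
  then have "cbil (dzv \<xi> q) (Pb q) = - cbil (\<xi> q) (Pzb q)" unfolding dzs_cbil[OF dx dPb]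
    by (simp add: eq_neg_iff_add_eq_0)
  also have "\<dots> = - E q / 2 * cbil (\<xi> q) (H q)" unfolding gauss_Pzb[OF q] using n by simp
  finally have d3: "cbil (dzv \<xi> q) (Pb q) = - E q / 2 * cbil (\<xi> q) (H q)" .
  show ?thesis unfolding nproj_eq[OF q] d1 d2 d3 using E_nonzero[OF q]
    by (simp add: vec_eq_iff field_simps)
qed

lemma cbil_normal_dzv:
  assumes "normal_field \<xi>" "q \<in> U" "normal_at q u"
  shows "cbil u (dzv \<xi> q) = cbil u (npj q (dzv \<xi> q))"
proof -
  have "cbil u (dzv \<xi> q) - cbil u (npj q (dzv \<xi> q)) = cbil u (dzv \<xi> q - npj q (dzv \<xi> q))"
    by simp
  also have "\<dots> = 0"
    unfolding weingarten[OF assms(1,2)] using assms(3) unfolding normal_at_def by simp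
  finally show ?thesis by simp
qed

lemma nproj_Pzb: "q \<in> U \<Longrightarrow> npj q (Pzb q) = (E q / 2) *s H q"
  unfolding gauss_Pzb nproj_smult nproj_diff using nproj_normal[OF _ normal_at_H] nproj_tangent
  by simp

lemma nproj_dzbv_h:
  assumes q: "q \<in> U" shows "npj q (dzbv h q) = 2 *s npj q (dzv Pzb q) - Ez q *s H q"
proof -
  define c where "c x = 2 * Ez x * inverse (E x)" for x
  have Cc: "Cinf_on U c"
    unfolding c_def[abs_def] by (intro Cinf_on_mult Cinf_on_const Cinf_on_Ez Cinf_on_inverse_E open_U)
  have dPzz: "Pzz differentiable (at q)" and dPz: "Pz differentiable (at q)" and dc: "c differentiable (at q)"
    using Cinf_on_imp_differentiable_at[OF Cinf_on_Pzz q] Cinf_on_imp_differentiable_at[OF Cinf_on_Pz q]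
      Cinf_on_imp_differentiable_at[OF Cc q] .
  have d1: "(\<lambda>x. 2 *s Pzz x) differentiable (at q)"
    using Cinf_on_imp_differentiable_at[OF Cinf_on_vec_smult[OF open_U Cinf_on_const Cinf_on_Pzz] q] .
  have d2: "(\<lambda>x. c x *s Pz x) differentiable (at q)"
    using Cinf_on_imp_differentiable_at[OF Cinf_on_vec_smult[OF open_U Cc Cinf_on_Pz] q] .
  have "dzbv Pzz q = dzv (dzbv Pz) q" using dzbv_dzv_commute[OF open_U q Cinf_on_Pz] .
  also have "\<dots> = dzv Pzb q" by (rule dzv_cong_open[OF open_U q]) (simp add: dzbv_Pz)
  finally have Pzzb: "dzbv Pzz q = dzv Pzb q" .
  have "dzbv h q = dzbv (\<lambda>x. 2 *s Pzz x - c x *s Pz x) q"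
    by (rule dzbv_cong_open[OF open_U q]) (simp add: h0_eq c_def divide_inverse)
  also have "\<dots> = 2 *s dzv Pzb q - (dzbs c q *s Pz q + c q *s Pzb q)"
    unfolding dzbv_diff[OF d1 d2] dzbv_smult[OF dc dPz] dzbv_Pz[OF q] Pzzb[symmetric]
    using dzbv_smult[of "\<lambda>x. 2" q Pzz] dPzz by simp
  finally have Dbh: "dzbv h q = 2 *s dzv Pzb q - (dzbs c q *s Pz q + c q *s Pzb q)" .
  show ?thesis
    unfolding Dbh nproj_diff nproj_add nproj_smult nproj_Pzb[OF q] c_def using nproj_tangent[OF q] E_nonzero[OF q]
    by (simp add: vec_eq_iff field_simps)
qed

lemma nproj_dzv_H:
  assumes q: "q \<in> U" shows "E q *s npj q (dzv H q) = 2 *s npj q (dzv Pzb q) - Ez q *s H q"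
proof -
  define k where "k x = 2 * inverse (E x)" for x
  have Ck: "Cinf_on U k"
    unfolding k_def[abs_def] by (intro Cinf_on_mult Cinf_on_const Cinf_on_inverse_E open_U)
  have dk: "k differentiable (at q)" and dPzb: "Pzb differentiable (at q)" and dP: "P differentiable (at q)"
    using Cinf_on_imp_differentiable_at[OF Ck q] Cinf_on_imp_differentiable_at[OF Cinf_on_Pzb q]
      Cinf_on_imp_differentiable_at[OF Cinf_on_P q] .
  have d3: "(\<lambda>x. k x *s Pzb x) differentiable (at q)"
    using Cinf_on_imp_differentiable_at[OF Cinf_on_vec_smult[OF open_U Ck Cinf_on_Pzb] q] .
  have dkq: "dzs k q = - 2 * Ez q / (E q)^2"
    using dzs_mult[of "\<lambda>x. 2" q "\<lambda>x. inverse (E x)"] Cinf_on_imp_differentiable_at[OF Cinf_on_inverse_E q]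
      dzs_inverse[OF Cinf_on_imp_differentiable_at[OF Cinf_on_E q] E_nonzero[OF q]]
    unfolding k_def by simp
  have "dzv H q = dzv (\<lambda>x. k x *s Pzb x + P x) q"
    by (rule dzv_cong_open[OF open_U q]) (simp add: Hvec_eq k_def divide_inverse)
  also have "\<dots> = dzs k q *s Pzb q + k q *s dzv Pzb q + Pz q"
    using dzv_add[OF d3 dP] dzv_smult[OF dk dPzb] by simp
  finally have DH: "dzv H q = dzs k q *s Pzb q + k q *s dzv Pzb q + Pz q" .
  show ?thesis
    unfolding DH nproj_add nproj_smult nproj_Pzb[OF q] dkq k_def using nproj_tangent[OF q] E_nonzero[OF q]
    by (simp add: vec_eq_iff field_simps power2_eq_square)
qed

text \<open>The Codazzi equation comes from the commutation \<open>dzbv Pzz = dzv Pzb\<close> used in \<open>nproj_dzbv_h\<close>.\<close>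

lemma codazzi: "q \<in> U \<Longrightarrow> npj q (dzbv h q) = E q *s npj q (dzv H q)"
  using nproj_dzbv_h nproj_dzv_H by simp

definition "N1 q = cvec (n1 q)"
definition "N2 q = cvec (n2 q)"

lemma frame_at:
  assumes "q \<in> U"
  shows "norm (n1 q) = 1" "norm (n2 q) = 1" "n1 q \<bullet> n2 q = 0" "n1 q \<bullet> \<Phi> q = 0" "n2 q \<bullet> \<Phi> q = 0"
    "n1 q \<bullet> dirD 1 \<Phi> q = 0" "n2 q \<bullet> dirD 1 \<Phi> q = 0" "n1 q \<bullet> dirD \<i> \<Phi> q = 0" "n2 q \<bullet> dirD \<i> \<Phi> q = 0"
  using frame assms unfolding oriented_normal_frame_def by auto

lemma Cinf_on_N: "Cinf_on U N1" "Cinf_on U N2"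
  using frame Cinf_on_cvec[OF open_U smooth_on_imp_Cinf_on]
  unfolding oriented_normal_frame_def N1_def[abs_def] N2_def[abs_def] by auto

lemma cbil_N:
  assumes "q \<in> U"
  shows "cbil (N1 q) (N1 q) = 1" "cbil (N2 q) (N2 q) = 1" "cbil (N1 q) (N2 q) = 0"
    "cbil (N1 q) (P q) = 0" "cbil (N2 q) (P q) = 0" "cbil (N1 q) (X q) = 0" "cbil (N2 q) (X q) = 0"
    "cbil (N1 q) (Y q) = 0" "cbil (N2 q) (Y q) = 0"
  using frame_at[OF assms] unfolding N1_def N2_def P_eq X_def Y_def cbil_cvec
  by (simp_all add: power2_norm_eq_inner[symmetric])

lemma normal_at_N: "q \<in> U \<Longrightarrow> normal_at q (N1 q)" "q \<in> U \<Longrightarrow> normal_at q (N2 q)"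
  unfolding normal_at_def using cbil_N by (simp_all add: Pz_eq Pb_eq)

text \<open>The real vectors \<open>\<Phi>, \<Phi>_x, \<Phi>_y, n1, n2\<close> form an orthogonal basis of \<open>\<real>\<^sup>5\<close>.\<close>

lemma normal_frame_expansion:
  assumes q: "q \<in> U" and u: "normal_at q u"
  shows "u = cbil u (N1 q) *s N1 q + cbil u (N2 q) *s N2 q"
proof -
  define w where "w = u - (cbil u (N1 q) *s N1 q + cbil u (N2 q) *s N2 q)"
  define B where "B = {\<Phi> q, dirD 1 \<Phi> q, dirD \<i> \<Phi> q, n1 q, n2 q}"
  have c: "norm (\<Phi> q) = 1" "dirD 1 \<Phi> q \<noteq> 0" "norm (dirD 1 \<Phi> q) = norm (dirD \<i> \<Phi> q)"
    "dirD 1 \<Phi> q \<bullet> dirD \<i> \<Phi> q = 0"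
    using conformal q unfolding conformal_immersion_S4_def by auto
  have "cbil (P q) (X q) = 0" "cbil (P q) (Y q) = 0"
    unfolding X_eq[OF q] Y_eq[OF q] using cbil_P_Pz[OF q] by simp_all
  then have PX: "\<Phi> q \<bullet> dirD 1 \<Phi> q = 0" "\<Phi> q \<bullet> dirD \<i> \<Phi> q = 0"
    unfolding P_eq X_def Y_def cbil_cvec by simp_all
  have nz: "\<Phi> q \<noteq> 0" "dirD 1 \<Phi> q \<noteq> 0" "dirD \<i> \<Phi> q \<noteq> 0" "n1 q \<noteq> 0" "n2 q \<noteq> 0"
    using c frame_at(1,2)[OF q] by (metis norm_eq_zero norm_zero zero_neq_one)+
  have orth: "pairwise orthogonal B"
    unfolding B_def pairwise_def orthogonal_def using PX c(4) frame_at[OF q]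
    by (auto simp: inner_commute)
  have ne: "a \<noteq> b" if "a \<bullet> b = 0" "a \<noteq> 0" for a b :: "real^5" using that by auto
  have "card B = 5"
    unfolding B_def using ne[OF PX(1) nz(1)] ne[OF PX(2) nz(1)] ne[OF frame_at(4)[OF q] nz(4)]
      ne[OF frame_at(5)[OF q] nz(5)] ne[OF c(4) nz(2)] ne[OF frame_at(6)[OF q] nz(4)]
      ne[OF frame_at(7)[OF q] nz(5)] ne[OF frame_at(8)[OF q] nz(4)] ne[OF frame_at(9)[OF q] nz(5)]
      ne[OF frame_at(3)[OF q] nz(4)]
    by simp
  have "w = 0"
  proof (rule cvec_orthogonal_imp_zero[where B=B])
    have "cbil w (P q) = 0" "cbil w (X q) = 0" "cbil w (Y q) = 0" "cbil w (N1 q) = 0" "cbil w (N2 q) = 0"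
      using u cbil_N[OF q] unfolding w_def normal_at_def X_eq[OF q] Y_eq[OF q]
      by (simp_all add: cbil_comm[of "N2 q" "N1 q"])
    then show "cbil w (cvec v) = 0" if "v \<in> B" for v
      using that unfolding B_def P_eq X_def Y_def N1_def N2_def by auto
    show "z = 0" if "\<And>v. v \<in> B \<Longrightarrow> z \<bullet> v = 0" for z
      using orthogonal_to_basis_imp_zero[OF orth _ _ that] nz \<open>card B = 5\<close> unfolding B_def by auto
  qed
  then show ?thesis unfolding w_def by simp
qed

abbreviation "\<epsilon>1 \<equiv> e1 n1 n2"
abbreviation "\<epsilon>2 \<equiv> e2 n1 n2"

lemma e1_e2_eq:
  "\<epsilon>1 q = (1 / complex_of_real (sqrt 2)) *s (N1 q + \<i> *s N2 q)"
  "\<epsilon>2 q = (1 / complex_of_real (sqrt 2)) *s (N1 q - \<i> *s N2 q)"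
  unfolding e1_def e2_def N1_def N2_def by auto

lemma Cinf_on_e1_e2: "Cinf_on U \<epsilon>1" "Cinf_on U \<epsilon>2"
  unfolding e1_e2_eq[abs_def]
  by (intro Cinf_on_vec_smult Cinf_on_add Cinf_on_diff Cinf_on_const Cinf_on_N open_U)+

lemma normal_at_e1_e2: "q \<in> U \<Longrightarrow> normal_at q (\<epsilon>1 q)" "q \<in> U \<Longrightarrow> normal_at q (\<epsilon>2 q)"
  unfolding e1_e2_eq
  by (intro normal_at_smult normal_at_add normal_at_diff normal_at_N; assumption)+

lemma normal_field_e1_e2: "normal_field \<epsilon>1" "normal_field \<epsilon>2"
  unfolding normal_field_def using Cinf_on_e1_e2 normal_at_e1_e2 by blast+

lemma cbil_normal_e1_e2:
  assumes q: "q \<in> U" and u: "normal_at q u" and v: "normal_at q v"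
  shows "cbil u v = cbil (\<epsilon>1 q) u * cbil (\<epsilon>2 q) v + cbil (\<epsilon>2 q) u * cbil (\<epsilon>1 q) v"
proof -
  define s where "s = 1 / complex_of_real (sqrt 2)"
  have ss: "s * s = 1/2" unfolding s_def by (simp flip: of_real_mult)
  have e: "cbil (\<epsilon>1 q) w = s * (cbil (N1 q) w + \<i> * cbil (N2 q) w)"
          "cbil (\<epsilon>2 q) w = s * (cbil (N1 q) w - \<i> * cbil (N2 q) w)" for w
    unfolding e1_e2_eq s_def by (simp_all add: add_divide_distrib diff_divide_distrib)
  have "cbil u v = cbil (N1 q) u * cbil (N1 q) v + cbil (N2 q) u * cbil (N2 q) v"
    by (subst normal_frame_expansion[OF q v]) (simp add: cbil_comm)
  also have "\<dots> = (2 * (s * s)) * (cbil (N1 q) u * cbil (N1 q) v + cbil (N2 q) u * cbil (N2 q) v)"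
    unfolding ss by simp
  also have "\<dots> = cbil (\<epsilon>1 q) u * cbil (\<epsilon>2 q) v + cbil (\<epsilon>2 q) u * cbil (\<epsilon>1 q) v"
    unfolding e by (simp add: algebra_simps)
  finally show ?thesis .
qed

section \<open>The second derivative of the pseudo Gauss map\<close>

abbreviation "\<psi> \<equiv> psiF \<Phi>"
abbreviation "nabla_psi \<equiv> nablaT \<Phi> (psiF \<Phi>)"
abbreviation "Dh \<equiv> nablaN \<Phi> h"
abbreviation "Dbh \<equiv> nablaNb \<Phi> h"
abbreviation "DDbh \<equiv> nablaN \<Phi> (nablaNb \<Phi> h)"

lemma normal_field_nablaN: "Cinf_on U \<xi> \<Longrightarrow> normal_field (nablaN \<Phi> \<xi>)"
  unfolding nablaN_def[abs_def] by (intro normal_field_nproj Cinf_on_dzv open_U)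

lemma nabla_psi_eq:
  assumes \<xi>: "normal_field \<xi>" and q: "q \<in> U"
  shows "nabla_psi \<xi> q =
    (cbil (dzv H q) (\<xi> q), cbil (dzv H q) (\<xi> q) *s P q - (cbil (\<xi> q) (h q) / E q) *s Pb q)"
proof -
  have C\<xi>: "Cinf_on U \<xi>" using \<xi> unfolding normal_field_def by blast
  have dx: "\<xi> differentiable (at q)" and dH: "H differentiable (at q)" and dP: "P differentiable (at q)"
    using Cinf_on_imp_differentiable_at[OF C\<xi> q] Cinf_on_imp_differentiable_at[OF Cinf_on_H q] Cinf_on_imp_differentiable_at[OF Cinf_on_P q] .
  have dc: "(\<lambda>x. cbil (H x) (\<xi> x)) differentiable (at q)"
    using Cinf_on_imp_differentiable_at[OF Cinf_on_cbil[OF open_U Cinf_on_H C\<xi>] q] .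
  have dcP: "(\<lambda>x. cbil (H x) (\<xi> x) *s P x) differentiable (at q)"
    using Cinf_on_imp_differentiable_at[OF Cinf_on_vec_smult[OF open_U Cinf_on_cbil[OF open_U Cinf_on_H C\<xi>] Cinf_on_P] q] .
  have \<psi>_eq: "\<psi> \<eta> = (\<lambda>x. (cbil (H x) (\<eta> x), cbil (H x) (\<eta> x) *s P x + \<eta> x))" for \<eta>
    unfolding psiF_def P_def by blast
  have "dzP (\<psi> \<xi>) q = (cbil (dzv H q) (\<xi> q) + cbil (H q) (dzv \<xi> q),
      (cbil (dzv H q) (\<xi> q) + cbil (H q) (dzv \<xi> q)) *s P q + cbil (H q) (\<xi> q) *s Pz q + dzv \<xi> q)"
    unfolding dzP_def \<psi>_eq using dzv_add[OF dcP dx] dzv_smult[OF dc dP] dzs_cbil[OF dH dx] by simp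
  moreover have "\<psi> (nablaN \<Phi> \<xi>) q =
      (cbil (H q) (dzv \<xi> q), cbil (H q) (dzv \<xi> q) *s P q + npj q (dzv \<xi> q))"
    unfolding \<psi>_eq nablaN_def cbil_normal_dzv[OF \<xi> q normal_at_H[OF q], symmetric] ..
  moreover have "npj q (dzv \<xi> q) = dzv \<xi> q + cbil (\<xi> q) (H q) *s Pz q + (cbil (\<xi> q) (h q) / E q) *s Pb q"
    using weingarten[OF \<xi> q] by (simp add: vec_eq_iff field_simps)
  ultimately show ?thesis
    unfolding nablaT_def by (simp add: vec_eq_iff field_simps cbil_comm[of "H q"])
qed

lemma d2psi_eq_derivatives:
  assumes \<xi>: "normal_field \<xi>" and q: "q \<in> U"
  defines "A \<equiv> \<lambda>x. cbil (dzv H x) (\<xi> x)" and "K \<equiv> \<lambda>x. cbil (\<xi> x) (h x) * inverse (E x)"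
  shows "d2psi \<Phi> \<xi> q = (dzs A q - cbil (dzv H q) (nablaN \<Phi> \<xi> q),
     (dzs A q - cbil (dzv H q) (nablaN \<Phi> \<xi> q)) *s P q + A q *s Pz q
     - (dzs K q - cbil (nablaN \<Phi> \<xi> q) (h q) / E q) *s Pb q - K q *s Pzb q)"
proof -
  have C\<xi>: "Cinf_on U \<xi>" using \<xi> unfolding normal_field_def by blast
  have CA: "Cinf_on U A" unfolding A_def by (intro Cinf_on_cbil Cinf_on_dzv Cinf_on_H C\<xi> open_U)
  have CK: "Cinf_on U K" unfolding K_def by (intro Cinf_on_mult Cinf_on_cbil Cinf_on_h Cinf_on_inverse_E C\<xi> open_U)
  have dA: "A differentiable (at q)" and dK: "K differentiable (at q)" and dP: "P differentiable (at q)"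
    and dPb: "Pb differentiable (at q)"
    using Cinf_on_imp_differentiable_at[OF CA q] Cinf_on_imp_differentiable_at[OF CK q] Cinf_on_imp_differentiable_at[OF Cinf_on_P q]
      Cinf_on_imp_differentiable_at[OF Cinf_on_Pb q] .
  have dAP: "(\<lambda>x. A x *s P x) differentiable (at q)"
    using Cinf_on_imp_differentiable_at[OF Cinf_on_vec_smult[OF open_U CA Cinf_on_P] q] .
  have dKP: "(\<lambda>x. K x *s Pb x) differentiable (at q)"
    using Cinf_on_imp_differentiable_at[OF Cinf_on_vec_smult[OF open_U CK Cinf_on_Pb] q] .
  have nabla_psi_U: "nabla_psi \<xi> x = (A x, A x *s P x - K x *s Pb x)" if "x \<in> U" for x
    unfolding nabla_psi_eq[OF \<xi> that] A_def K_def by (simp add: divide_inverse)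
  have "dzs (\<lambda>x. fst (nabla_psi \<xi> x)) q = dzs A q"
    by (rule dzs_cong_open[OF open_U q]) (simp add: nabla_psi_U)
  moreover have "dzv (\<lambda>x. snd (nabla_psi \<xi> x)) q = dzv (\<lambda>x. A x *s P x - K x *s Pb x) q"
    by (rule dzv_cong_open[OF open_U q]) (simp add: nabla_psi_U)
  ultimately have "dzP (nabla_psi \<xi>) q = (dzs A q, (dzs A q *s P q + A q *s Pz q) - (dzs K q *s Pb q + K q *s Pzb q))"
    unfolding dzP_def dzv_diff[OF dAP dKP] dzv_smult[OF dA dP] dzv_smult[OF dK dPb] by simp
  then show ?thesis
    unfolding d2psi_def nablaT_def[of _ "nabla_psi"] nabla_psi_eq[OF normal_field_nablaN[OF C\<xi>] q]
    by (simp add: vec_eq_iff field_simps)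
qed

definition "DH x = npj x (dzv H x)"

lemma normal_field_DH: "normal_field DH"
  unfolding DH_def[abs_def] by (intro normal_field_nproj Cinf_on_dzv Cinf_on_H open_U)

lemma Dbh_eq: "x \<in> U \<Longrightarrow> Dbh x = E x *s DH x"
  unfolding nablaNb_def DH_def using codazzi by blast

lemma dzv_H_eq: "x \<in> U \<Longrightarrow> dzv H x = DH x - cbil (H x) (H x) *s Pz x - (cbil (H x) (h x) / E x) *s Pb x"
  using weingarten[OF normal_field_H] unfolding DH_def by (simp add: vec_eq_iff field_simps)

lemma cbil_dzv_H:
  assumes "q \<in> U" "normal_at q u"
  shows "cbil (dzv H q) u = cbil (DH q) u"
  unfolding dzv_H_eq[OF assms(1)] using normal_atD[OF assms(2)] by simp

text \<open>A pair \<open>(B, B *s P q + v)\<close> in \<open>\<complex> \<times> \<complex>\<^sup>5\<close> is \<open>B (a + \<Phi>) + v\<close>.\<close>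

lemma coefficient_Pz:
  assumes "normal_field \<xi>" "q \<in> U"
  shows "cbil (dzv H q) (\<xi> q) = cbil (\<xi> q) (Dbh q) / E q"
  using cbil_dzv_H[OF assms(2)] assms E_nonzero[OF assms(2)]
  unfolding Dbh_eq[OF assms(2)] normal_field_def by (simp add: cbil_comm)

lemma coefficient_Pb:
  assumes \<xi>: "normal_field \<xi>" and q: "q \<in> U"
  shows "dzs (\<lambda>x. cbil (\<xi> x) (h x) * inverse (E x)) q - cbil (nablaN \<Phi> \<xi> q) (h q) / E q
     = cbil (\<xi> q) (Dh q) / E q - cbil (\<xi> q) (h q) * Ez q / (E q)^2"
proof -
  have C\<xi>: "Cinf_on U \<xi>" and n: "normal_at q (\<xi> q)" using \<xi> q unfolding normal_field_def by auto
  have dx: "\<xi> differentiable (at q)" and dh: "h differentiable (at q)"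
    and dEi: "(\<lambda>x. inverse (E x)) differentiable (at q)"
    using Cinf_on_imp_differentiable_at[OF C\<xi> q] Cinf_on_imp_differentiable_at[OF Cinf_on_h q]
      Cinf_on_imp_differentiable_at[OF Cinf_on_inverse_E q] .
  have dc: "(\<lambda>x. cbil (\<xi> x) (h x)) differentiable (at q)"
    using Cinf_on_imp_differentiable_at[OF Cinf_on_cbil[OF open_U C\<xi> Cinf_on_h] q] .
  have "dzs (\<lambda>x. cbil (\<xi> x) (h x) * inverse (E x)) q
     = (cbil (dzv \<xi> q) (h q) + cbil (\<xi> q) (dzv h q)) * inverse (E q) + cbil (\<xi> q) (h q) * (- Ez q / (E q)^2)"
    unfolding dzs_mult[OF dc dEi] dzs_cbil[OF dx dh]
      dzs_inverse[OF Cinf_on_imp_differentiable_at[OF Cinf_on_E q] E_nonzero[OF q]] ..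
  also have "cbil (dzv \<xi> q) (h q) = cbil (nablaN \<Phi> \<xi> q) (h q)"
    using cbil_normal_dzv[OF \<xi> q normal_at_h[OF q]] unfolding nablaN_def by (simp add: cbil_comm)
  also have "cbil (\<xi> q) (dzv h q) = cbil (\<xi> q) (Dh q)"
    using cbil_normal_dzv[OF normal_field_h q n] unfolding nablaN_def by simp
  finally show ?thesis using E_nonzero[OF q] by (simp add: field_simps power2_eq_square)
qed

lemma coefficient_P:
  assumes \<xi>: "normal_field \<xi>" and q: "q \<in> U"
  shows "dzs (\<lambda>x. cbil (dzv H x) (\<xi> x)) q - cbil (dzv H q) (nablaN \<Phi> \<xi> q)
     = cbil (\<xi> q) (DDbh q) / E q - Ez q * cbil (\<xi> q) (Dbh q) / (E q)^2"
proof -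
  have C\<xi>: "Cinf_on U \<xi>" and n: "normal_at q (\<xi> q)" using \<xi> q unfolding normal_field_def by auto
  have CDH: "Cinf_on U DH" and nDH: "normal_at q (DH q)"
    using normal_field_DH q unfolding normal_field_def by auto
  have dx: "\<xi> differentiable (at q)" and dDH: "DH differentiable (at q)" and dE: "E differentiable (at q)"
    using Cinf_on_imp_differentiable_at[OF C\<xi> q] Cinf_on_imp_differentiable_at[OF CDH q] Cinf_on_imp_differentiable_at[OF Cinf_on_E q] .
  have "dzs (\<lambda>x. cbil (dzv H x) (\<xi> x)) q = dzs (\<lambda>x. cbil (DH x) (\<xi> x)) q"
    by (rule dzs_cong_open[OF open_U q])
      (use \<xi> cbil_dzv_H in \<open>simp add: normal_field_def\<close>)
  also have "\<dots> = cbil (dzv DH q) (\<xi> q) + cbil (DH q) (nablaN \<Phi> \<xi> q)"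
    unfolding dzs_cbil[OF dDH dx] nablaN_def cbil_normal_dzv[OF \<xi> q nDH] ..
  finally have 1: "dzs (\<lambda>x. cbil (dzv H x) (\<xi> x)) q = cbil (dzv DH q) (\<xi> q) + cbil (DH q) (nablaN \<Phi> \<xi> q)" .
  have 2: "cbil (dzv H q) (nablaN \<Phi> \<xi> q) = cbil (DH q) (nablaN \<Phi> \<xi> q)"
    using cbil_dzv_H[OF q] normal_field_nablaN[OF C\<xi>] q unfolding normal_field_def by blast
  have "DDbh q = npj q (dzv (\<lambda>x. E x *s DH x) q)"
    unfolding nablaN_def using dzv_cong_open[OF open_U q Dbh_eq] by simp
  also have "\<dots> = Ez q *s DH q + E q *s npj q (dzv DH q)"
    unfolding dzv_smult[OF dE dDH] nproj_add nproj_smult nproj_normal[OF q nDH] ..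
  finally have 3: "cbil (\<xi> q) (DDbh q) = Ez q * cbil (\<xi> q) (DH q) + E q * cbil (\<xi> q) (dzv DH q)"
    using cbil_normal_nproj[OF q n] by simp
  show ?thesis unfolding 1 2 3 Dbh_eq[OF q] using E_nonzero[OF q]
    by (simp add: cbil_comm[of "dzv DH q"] field_simps power2_eq_square)
qed

lemma d2psi_eq:
  assumes "normal_field \<xi>" "q \<in> U"
  shows "d2psi \<Phi> \<xi> q =
    (cbil (\<xi> q) (DDbh q) / E q - Ez q * cbil (\<xi> q) (Dbh q) / (E q)^2,
     (cbil (\<xi> q) (DDbh q) / E q - Ez q * cbil (\<xi> q) (Dbh q) / (E q)^2) *s P q
     + (cbil (\<xi> q) (Dbh q) / E q) *s Pz q
     - (cbil (\<xi> q) (Dh q) / E q - cbil (\<xi> q) (h q) * Ez q / (E q)^2) *s Pb q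
     - (cbil (\<xi> q) (h q) * inverse (E q)) *s Pzb q)"
  unfolding d2psi_eq_derivatives[OF assms] coefficient_P[OF assms, symmetric]
    coefficient_Pz[OF assms, symmetric] coefficient_Pb[OF assms, symmetric] ..

lemma cbil_Pzb_Pzb:
  assumes q: "q \<in> U" shows "cbil (Pzb q) (Pzb q) = (E q)^2 / 4 * (cbil (H q) (H q) + 1)"
proof -
  have "cbil (H q) (P q) = 0" "cbil (P q) (H q) = 0"
    using normal_at_H[OF q] normal_atD[OF normal_at_H[OF q]] unfolding normal_at_def by auto
  then have "cbil (Pzb q) (Pzb q) = (E q / 2) * (E q / 2) * (cbil (H q) (H q) + cbil (P q) (P q))"
    unfolding gauss_Pzb[OF q] by (simp add: algebra_simps)
  then show ?thesis using cbil_P_P[OF q] by (simp add: power2_eq_square)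
qed

text \<open>Only the pairings \<open>(a + \<Phi>, Pzb)\<close>, \<open>(Pz, Pb)\<close> and \<open>(Pzb, Pzb)\<close> survive.\<close>

lemma hbil_frame:
  assumes q: "q \<in> U"
  shows "hbil (B, B *s P q + A *s Pz q - C *s Pb q - K *s Pzb q)
              (B', B' *s P q + A' *s Pz q - C' *s Pb q - K' *s Pzb q)
     = E q / 2 * (B * K' + B' * K) - E q / 2 * (A * C' + A' * C)
       + (E q)^2 / 4 * (1 + cbil (H q) (H q)) * K * K'"
proof -
  have r: "cbil (P q) (P q) = 1" "cbil (P q) (Pz q) = 0" "cbil (P q) (Pb q) = 0" "cbil (P q) (Pzb q) = - E q / 2"
    "cbil (Pz q) (P q) = 0" "cbil (Pz q) (Pz q) = 0" "cbil (Pz q) (Pb q) = E q / 2" "cbil (Pz q) (Pzb q) = 0"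
    "cbil (Pb q) (P q) = 0" "cbil (Pb q) (Pz q) = E q / 2" "cbil (Pb q) (Pb q) = 0" "cbil (Pb q) (Pzb q) = 0"
    "cbil (Pzb q) (P q) = - E q / 2" "cbil (Pzb q) (Pz q) = 0" "cbil (Pzb q) (Pb q) = 0"
    "cbil (Pzb q) (Pzb q) = (E q)^2 / 4 * (cbil (H q) (H q) + 1)"
    using first_order_products[OF q] second_order_products[OF q] cbil_Pzb_Pzb[OF q]
      cbil_comm[of "Pzb q" "P q"] cbil_comm[of "Pzb q" "Pz q"] cbil_comm[of "Pzb q" "Pb q"] by auto
  have "hbil (B, B *s P q + A *s Pz q - C *s Pb q - K *s Pzb q)
              (B', B' *s P q + A' *s Pz q - C' *s Pb q - K' *s Pzb q)
    = - B * B' + B * B' + B * (K' * (E q / 2)) + B' * (K * (E q / 2)) - A * C' * (E q / 2) - C * A' * (E q / 2)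
      + K * K' * ((E q)^2 / 4 * (cbil (H q) (H q) + 1))"
    unfolding hbil_def by (simp add: r algebra_simps)
  also have "\<dots> = E q / 2 * (B * K' + B' * K) - E q / 2 * (A * C' + A' * C)
       + (E q)^2 / 4 * (1 + cbil (H q) (H q)) * K * K'"
    by (simp add: field_simps)
  finally show ?thesis .
qed

lemma hbil_d2psi:
  assumes "normal_field \<xi>" "normal_field \<eta>" and q: "q \<in> U"
  shows "hbil (d2psi \<Phi> \<xi> q) (d2psi \<Phi> \<eta> q) =
    (cbil (\<xi> q) (DDbh q) * cbil (\<eta> q) (h q) + cbil (\<eta> q) (DDbh q) * cbil (\<xi> q) (h q)
     - cbil (\<xi> q) (Dbh q) * cbil (\<eta> q) (Dh q) - cbil (\<eta> q) (Dbh q) * cbil (\<xi> q) (Dh q)) / (2 * E q)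
    + (1 + cbil (H q) (H q)) / 4 * cbil (\<xi> q) (h q) * cbil (\<eta> q) (h q)"
  unfolding d2psi_eq[OF assms(1) q] d2psi_eq[OF assms(2) q] hbil_frame[OF q] using E_nonzero[OF q]
  by (simp add: field_simps power2_eq_square)

end

section \<open>Montiel's forms\<close>

text \<open>Here \<open>x\<^sub>i, b\<^sub>i, d\<^sub>i, g\<^sub>i\<close> are the \<open>e\<^sub>i\<close>-components of \<open>DDbh, Dbh, Dh, h\<close> and \<open>c = |H|\<^sup>2\<close>.\<close>

lemma montiel_Q_identity:
  fixes x1 x2 b1 b2 d1 d2 g1 g2 E c :: "'a::field_char_0"
  assumes "E \<noteq> 0"
  shows "2 * ((x1 * g2 + x2 * g1 - b1 * d2 - b2 * d1) / (2 * E) + (1 + c) / 4 * g1 * g2) =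
    1 / E * ((x1 * g2 + x2 * g1) - (d1 * b2 + d2 * b1)) + 1/4 * (1 + c) * (g1 * g2 + g2 * g1)"
  using assms by (simp add: field_simps)

lemma montiel_O_identity:
  fixes x1 x2 b1 b2 d1 d2 g1 g2 E c :: "'a::field_char_0"
  assumes "E \<noteq> 0"
  shows "((x1 * g1 + x1 * g1 - b1 * d1 - b1 * d1) / (2 * E) + (1 + c) / 4 * g1 * g1)
       * ((x2 * g2 + x2 * g2 - b2 * d2 - b2 * d2) / (2 * E) + (1 + c) / 4 * g2 * g2) =
    1 / E\<^sup>2 *
      (1/4 * (x1 * x2 + x2 * x1) * (g1 * g2 + g2 * g1)
     + 1/4 * (d1 * d2 + d2 * d1) * (b1 * b2 + b2 * b1)
     - 1/2 * (x1 * d2 + x2 * d1) * (b1 * g2 + b2 * g1)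
     - 1/2 * (x1 * b2 + x2 * b1) * (d1 * g2 + d2 * g1)
     + 1/2 * (x1 * g2 + x2 * g1) * (d1 * b2 + d2 * b1))
    + 1/4 * (1 + c) * (1 / E) *
      (1/2 * (x1 * g2 + x2 * g1) * (g1 * g2 + g2 * g1)
     - (d1 * g2 + d2 * g1) * (b1 * g2 + b2 * g1)
     + 1/2 * (d1 * b2 + d2 * b1) * (g1 * g2 + g2 * g1))
    + 1/64 * (1 + c)\<^sup>2 * ((g1 * g2 + g2 * g1) * (g1 * g2 + g2 * g1))"
proof -
  define i where "i = 1 / E"
  define k where "k = (1 + c) / 4"
  have "(x1 * g1 + x1 * g1 - b1 * d1 - b1 * d1) / (2 * E) + (1 + c) / 4 * g1 * g1
      = i * (x1 * g1 - b1 * d1) + k * g1 * g1"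
    "(x2 * g2 + x2 * g2 - b2 * d2 - b2 * d2) / (2 * E) + (1 + c) / 4 * g2 * g2
      = i * (x2 * g2 - b2 * d2) + k * g2 * g2"
    "1 / E\<^sup>2 = i\<^sup>2" "1/4 * (1 + c) * (1 / E) = k * i" "1/64 * (1 + c)\<^sup>2 = k\<^sup>2 / 4"
    unfolding i_def k_def using assms by (simp_all add: field_simps power2_eq_square)
  then show ?thesis by (simp only:) (simp add: field_simps power2_eq_square)
qed

theorem theoremI:
  fixes U :: "complex set" and \<Phi> n1 n2 :: "complex \<Rightarrow> real^5" and p :: complex
  assumes "conformal_immersion_S4 U \<Phi>"
    and "oriented_normal_frame U \<Phi> n1 n2"
    and "p \<in> U"
  defines "h \<equiv> h0 \<Phi>"
    and "E \<equiv> e2lam \<Phi> p"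
    and "HH \<equiv> cbil (Hvec \<Phi> p) (Hvec \<Phi> p)"
  shows
    "(MontielQ \<Phi> n1 n2 p =
       (1 / E) * (cbil (nablaN \<Phi> (nablaNb \<Phi> h) p) (h p)
                  - cbil (nablaN \<Phi> h p) (nablaNb \<Phi> h p))
       + 1/4 * (1 + HH) * cbil (h p) (h p))
     \<and>
     (MontielO \<Phi> n1 n2 p =
       (1 / E\<^sup>2) *
         (1/4 * cbil (nablaN \<Phi> (nablaNb \<Phi> h) p) (nablaN \<Phi> (nablaNb \<Phi> h) p) * cbil (h p) (h p)
        + 1/4 * cbil (nablaN \<Phi> h p) (nablaN \<Phi> h p) * cbil (nablaNb \<Phi> h p) (nablaNb \<Phi> h p)
        - 1/2 * cbil (nablaN \<Phi> (nablaNb \<Phi> h) p) (nablaN \<Phi> h p) * cbil (nablaNb \<Phi> h p) (h p)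
        - 1/2 * cbil (nablaN \<Phi> (nablaNb \<Phi> h) p) (nablaNb \<Phi> h p) * cbil (nablaN \<Phi> h p) (h p)
        + 1/2 * cbil (nablaN \<Phi> (nablaNb \<Phi> h) p) (h p) * cbil (nablaN \<Phi> h p) (nablaNb \<Phi> h p))
     + 1/4 * (1 + HH) * (1 / E) *
         (1/2 * cbil (nablaN \<Phi> (nablaNb \<Phi> h) p) (h p) * cbil (h p) (h p)
        - cbil (nablaN \<Phi> h p) (h p) * cbil (nablaNb \<Phi> h p) (h p)
        + 1/2 * cbil (nablaN \<Phi> h p) (nablaNb \<Phi> h p) * cbil (h p) (h p))
     + 1/64 * (1 + HH)\<^sup>2 * (cbil (h p) (h p) * cbil (h p) (h p)))"
proof -
  interpret conformal_chart U \<Phi> n1 n2 using assms(1,2) by unfold_locales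
  have p: "p \<in> U" by fact
  have normal: "normal_at p (DDbh p)" "normal_at p (Dbh p)" "normal_at p (Dh p)" "normal_at p (h0 \<Phi> p)"
    unfolding nablaN_def nablaNb_def using normal_at_nproj[OF p] normal_at_h[OF p] by auto
  note coords = cbil_normal_e1_e2[OF p]
  note hbil = hbil_d2psi[OF normal_field_e1_e2(1) normal_field_e1_e2(2) p]
    hbil_d2psi[OF normal_field_e1_e2(1) normal_field_e1_e2(1) p]
    hbil_d2psi[OF normal_field_e1_e2(2) normal_field_e1_e2(2) p]
  show ?thesis
    unfolding MontielQ_def MontielO_def hbil h_def E_def HH_def
      coords[OF normal(1) normal(1)] coords[OF normal(2) normal(2)] coords[OF normal(3) normal(3)]
      coords[OF normal(4) normal(4)] coords[OF normal(1) normal(3)] coords[OF normal(1) normal(2)]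
      coords[OF normal(1) normal(4)] coords[OF normal(2) normal(4)] coords[OF normal(3) normal(4)]
      coords[OF normal(3) normal(2)]
    by (rule conjI[OF montiel_Q_identity montiel_O_identity]; rule E_nonzero[OF p])
qed

end
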